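(* Fix $n$. There exists a function $u^n:\mathbb{R}^+\setminus\{0\}\to\mathbb{R}^+\cup\{\infty\}$ with $\lim_{x\to\infty}u^n(x)=0$, independent of the choice of $z$, $\pi$ and $\rho$, such that for every $z=\{z_0,\dots,z_n\}$ with pairwise distinct coordinates and $\alpha=\min_{i\neq j}|z_i-z_j|$, every $\rho>0$, every $k\in\{1,\dots,n\}$ and every $\pi\in\mathcal{P}^k_z$, $$\left|\mathbb{P}_0[\mathcal{T}_\pi<\mathcal{T}_0]-\frac{C(\pi)}{\rho^{k-1}\gamma_0}F(\pi)\right|\le u^n(\alpha\rho)\frac{C(\pi)}{\rho^{k-1}\gamma_0}F(\pi).$$
   Context: $\mathcal{P}_z$ is the set of partitions of $z$; $\mathcal{P}^r_z$ those with $n+1-r$ blocks; $\pi_0$ is the partition into singletons. The ARG $\Gamma^{\rho,z}$ is the continuous-time Markov chain on $\mathcal{P}_z$ in which each pair of blocks merges at rate $1$ and each block $\{z_{i_1}<\dots<z_{i_k}\}$ splits into $\{z_{i_1},\dots,z_{i_j}\}$ and $\{z_{i_{j+1}},\dots,z_{i_k}\}$ at rate $\rho(z_{i_{j+1}}-z_{i_j})$. $\mathbb{P}_0$ is its law started at $\pi_0$; $t^+_0=\inf\{t>0:\Gamma^{\rho,z}_t\ne\pi_0\}$, $\mathcal{T}_0=\inf\{t>t_0^+:\Gamma^{\rho,z}_t=\pi_0\}$, $\mathcal{T}_\pi=\inf\{t>0:\Gamma^{\rho,z}_t=\pi\}$. $\gamma_0=\frac{n(n+1)}{2}$. The cover length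 of $\pi$ with blocks $b_i$ is $C(\pi)=\sum_i\max_{x,y\in b_i}|x-y|$. A coalescence scenario of order $r$ is a sequence $(s_k)_{0\le k\le r}$ with $s_0=\pi_0$ and each $s_k$ obtained from $s_{k-1}$ by merging two blocks; $\mathcal{S}(\pi)$ is the set of such scenarios ending at $s_r=\pi$; its energy is $E(s)=\prod_{i=1}^rC(s_i)$; and $F(\pi)=\sum_{s\in\mathcal{S}(\pi)}1/E(s)$. *)

theory Defs
  imports Complex_Main "HOL-Library.Disjoint_Sets" "HOL-Library.Extended_Nonnegative_Real"
begin

text \<open>The point set z = {z_0,...,z_n} is a finite set of reals (so coordinates are
pairwise distinct). Partitions of z are sets of blocks.\<close>

definition partitions_of :: "real set \<Rightarrow> real set set set" where
  "partitions_of z = {P. partition_on z P}"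

definition partitions_r :: "real set \<Rightarrow> nat \<Rightarrow> real set set set" where
  "partitions_r z r = {P \<in> partitions_of z. card P + r = card z}"

definition pi0 :: "real set \<Rightarrow> real set set" where
  "pi0 z = (\<lambda>x. {x}) ` z"

definition gamma0 :: "nat \<Rightarrow> real" where
  "gamma0 n = real n * (real n + 1) / 2"

definition min_dist :: "real set \<Rightarrow> real" where
  "min_dist z = Min {\<bar>x - y\<bar> | x y. x \<in> z \<and> y \<in> z \<and> x \<noteq> y}"

definition cover_length :: "real set set \<Rightarrow> real" where
  "cover_length P = (\<Sum>b\<in>P. Max {\<bar>x - y\<bar> | x y. x \<in> b \<and> y \<in> b})"

definition merge_blocks :: "real set set \<Rightarrow> real set \<Rightarrow> real set \<Rightarrow> real set set" where
  "merge_blocks P b1 b2 = insert (b1 \<union> b2) (P - {b1, b2})"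

definition split_block :: "real set set \<Rightarrow> real set \<Rightarrow> real \<Rightarrow> real \<Rightarrow> real set set" where
  "split_block P b x y = insert {w \<in> b. w \<le> x} (insert {w \<in> b. y \<le> w} (P - {b}))"

definition is_merge :: "real set set \<Rightarrow> real set set \<Rightarrow> bool" where
  "is_merge P Q \<longleftrightarrow> (\<exists>b1\<in>P. \<exists>b2\<in>P. b1 \<noteq> b2 \<and> Q = merge_blocks P b1 b2)"

definition merge_events :: "real set set \<Rightarrow> real set set \<Rightarrow> real set set set" where
  "merge_events P Q = {{b1, b2} | b1 b2. b1 \<in> P \<and> b2 \<in> P \<and> b1 \<noteq> b2 \<and> Q = merge_blocks P b1 b2}"

definition split_events :: "real set set \<Rightarrow> real set set \<Rightarrow> (real set \<times> real \<times> real) set" where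
  "split_events P Q = {(b, x, y). b \<in> P \<and> x \<in> b \<and> y \<in> b \<and> x < y \<and>
      \<not> (\<exists>w\<in>b. x < w \<and> w < y) \<and> Q = split_block P b x y}"

definition arg_rate :: "real \<Rightarrow> real set set \<Rightarrow> real set set \<Rightarrow> real" where
  "arg_rate \<rho> P Q = real (card (merge_events P Q)) +
      (\<Sum>(b, x, y)\<in>split_events P Q. \<rho> * (y - x))"

definition arg_total_rate :: "real set \<Rightarrow> real \<Rightarrow> real set set \<Rightarrow> real" where
  "arg_total_rate z \<rho> P = (\<Sum>Q\<in>partitions_of z - {P}. arg_rate \<rho> P Q)"

definition arg_jump :: "real set \<Rightarrow> real \<Rightarrow> real set set \<Rightarrow> real set set \<Rightarrow> real" where
  "arg_jump z \<rho> P Q = (if Q = P then 0 else arg_rate \<rho> P Q / arg_total_rate z \<rho> P)"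

fun path_prob :: "('a \<Rightarrow> 'a \<Rightarrow> real) \<Rightarrow> 'a list \<Rightarrow> real" where
  "path_prob p (x # y # ys) = p x y * path_prob p (y # ys)"
| "path_prob p _ = 1"

text \<open>Probability that a discrete jump chain with transition probabilities p on state
space S, started at a, visits b (at a time \<ge> 1) before returning to a: the sum over all
finite paths a, x_1, ..., x_m, b with intermediate states outside {a, b}.\<close>
definition hit_before_return :: "'a set \<Rightarrow> ('a \<Rightarrow> 'a \<Rightarrow> real) \<Rightarrow> 'a \<Rightarrow> 'a \<Rightarrow> real" where
  "hit_before_return S p a b =
     (\<Sum>m. \<Sum>xs\<in>{xs. length xs = m \<and> set xs \<subseteq> S - {a, b}}. path_prob p (a # xs @ [b]))"

text \<open>P_0[T_pi < T_0] for the ARG: since the chain is a finite-state continuous-time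
Markov chain, this event is the event that its jump chain, started at pi0, visits pi
before returning to pi0.\<close>
definition arg_hit_prob :: "real set \<Rightarrow> real \<Rightarrow> real set set \<Rightarrow> real" where
  "arg_hit_prob z \<rho> P = hit_before_return (partitions_of z) (arg_jump z \<rho>) (pi0 z) P"

definition scenarios :: "real set \<Rightarrow> real set set \<Rightarrow> real set set list set" where
  "scenarios z P = {s. s \<noteq> [] \<and> hd s = pi0 z \<and> last s = P \<and>
      (\<forall>i. Suc i < length s \<longrightarrow> is_merge (s ! i) (s ! Suc i))}"

definition energy :: "real set set list \<Rightarrow> real" where
  "energy s = (\<Prod>i\<in>{1..<length s}. cover_length (s ! i))"

definition F_fun :: "real set \<Rightarrow> real set set \<Rightarrow> real" where
  "F_fun z P = (\<Sum>s\<in>scenarios z P. 1 / energy s)"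

end

theory Submission
  imports Defs
begin

(* The jump chain of the ARG started at pi0 z can reach P before returning to pi0 z along the
   coalescence scenarios of P.  The first merge has probability 1/gamma0, and a later one out of a
   state s has probability 1/T(s) with rho C(s) <= T(s) <= gamma0 + rho C(s), where T is the total
   rate.  Summing over the scenarios, these paths alone contribute at least
   (alpha rho / (alpha rho + gamma0))^(k-1) times the main term C(P) F(P) / (rho^(k-1) gamma0),
   where alpha = min_dist z.

   For the upper bound, (1 + delta)^(card z - card Q) times the main term for Q is a supersolution of
   the first-passage equations when delta is of order 1/(alpha rho): merges reproduce the main term
   through the recursion C(Q) F(Q) = sum of F over the merge predecessors of Q, while a state r that
   splits into Q satisfies alpha C(r) F(r) <= K C(Q) F(Q) with K depending only on card z.  This last
   estimate rests on comparing F(Q) with a product of explicit weights of the blocks of Q (the best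
   product of reciprocal diameters over the ways of cutting a block successively at its gaps), up to
   factors depending only on card z. *)

section \<open>Gaps of finite sets of reals\<close>

definition diam :: "real set \<Rightarrow> real" where
  "diam c = Max c - Min c"

abbreviation below :: "real set \<Rightarrow> real \<Rightarrow> real set" where
  "below c a \<equiv> {w \<in> c. w \<le> a}"

abbreviation above :: "real set \<Rightarrow> real \<Rightarrow> real set" where
  "above c a \<equiv> {w \<in> c. a < w}"

definition adjacent_pairs :: "real set \<Rightarrow> (real \<times> real) set" where
  "adjacent_pairs c = {(x, y). x \<in> c \<and> y \<in> c \<and> x < y \<and> \<not> (\<exists>w\<in>c. x < w \<and> w < y)}"

lemma diam_singleton [simp]: "diam {a} = 0"
  by (simp add: diam_def)

lemma diam_nonneg: "finite c \<Longrightarrow> c \<noteq> {} \<Longrightarrow> 0 \<le> diam c"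
  unfolding diam_def by (simp add: Max_ge Min_le_iff Min_in)

lemma diam_ge_dist:
  assumes "finite c" "x \<in> c" "y \<in> c"
  shows "\<bar>x - y\<bar> \<le> diam c"
  using assms unfolding diam_def by (smt (verit) Max_ge Min_le)

lemma diam_pos:
  assumes "finite c" "x \<in> c" "y \<in> c" "x \<noteq> y"
  shows "0 < diam c"
  using diam_ge_dist[OF assms(1-3)] assms(4) by linarith

lemma diam_mono:
  assumes "finite c" "A \<subseteq> c" "A \<noteq> {}"
  shows "diam A \<le> diam c"
  using Max_mono[OF assms(2,3,1)] Min_antimono[OF assms(2,3,1)] unfolding diam_def by simp

lemma Max_above:
  assumes "finite c" "above c a \<noteq> {}"
  shows "Max (above c a) = Max c"
proof -
  obtain w where "w \<in> c" "a < w" using assms(2) by auto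
  moreover have "Max c \<in> c" "w \<le> Max c" using calculation assms(1) by (auto intro: Max_in)
  ultimately have "Max c \<in> above c a" by auto
  then show ?thesis using assms by (intro antisym Max_mono Max_ge) auto
qed

lemma Min_below:
  assumes "finite c" "below c a \<noteq> {}"
  shows "Min (below c a) = Min c"
proof -
  obtain w where "w \<in> c" "w \<le> a" using assms(2) by auto
  moreover have "Min c \<in> c" "Min c \<le> w" using calculation assms(1) by (auto intro: Min_in)
  ultimately have "Min c \<in> below c a" by auto
  then show ?thesis using assms by (intro antisym Min_antimono Min_le) auto
qed

lemma diam_cut:
  assumes "finite c" "below c a \<noteq> {}" "above c a \<noteq> {}"
  shows "diam c = diam (below c a) + (Min (above c a) - Max (below c a)) + diam (above c a)"
  using Max_above[OF assms(1,3)] Min_below[OF assms(1,2)] unfolding diam_def by simp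

lemma finite_adjacent_pairs: "finite c \<Longrightarrow> finite (adjacent_pairs c)"
  by (rule finite_subset[of _ "c \<times> c"]) (auto simp: adjacent_pairs_def)

lemma adjacent_pairs_singleton [simp]: "adjacent_pairs {a} = {}"
  by (auto simp: adjacent_pairs_def)

lemma adjacent_pairs_insert_Max:
  assumes "finite A" "A \<noteq> {}" "\<forall>a\<in>A. a < b"
  shows "adjacent_pairs (insert b A) = insert (Max A, b) (adjacent_pairs A)"
proof (intro equalityI subsetI)
  fix p assume p: "p \<in> adjacent_pairs (insert b A)"
  then obtain x y where xy: "p = (x, y)" "x \<in> insert b A" "y \<in> insert b A" "x < y"
    "\<And>w. w \<in> insert b A \<Longrightarrow> x < w \<Longrightarrow> w < y \<Longrightarrow> False"
    unfolding adjacent_pairs_def by auto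
  have xA: "x \<in> A" using xy(2-4) assms(3) by auto
  show "p \<in> insert (Max A, b) (adjacent_pairs A)"
  proof (cases "y = b")
    case True
    have "\<not> x < Max A" using xy(5)[of "Max A"] assms True by auto
    then have "x = Max A" using xA assms(1) by (simp add: antisym)
    then show ?thesis using xy True by simp
  next
    case False
    then show ?thesis using xy xA unfolding adjacent_pairs_def by auto
  qed
next
  fix p assume p: "p \<in> insert (Max A, b) (adjacent_pairs A)"
  have MA: "Max A \<in> A" using assms(1,2) by simp
  then have "Max A < b" using assms(3) by blast
  moreover have "\<not> (Max A < w \<and> w < b)" if "w \<in> insert b A" for w
    using that by (auto dest!: Max_ge[OF assms(1)])
  ultimately have "(Max A, b) \<in> adjacent_pairs (insert b A)"
    using MA unfolding adjacent_pairs_def by blast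
  moreover have "adjacent_pairs A \<subseteq> adjacent_pairs (insert b A)"
    using assms(3) unfolding adjacent_pairs_def by auto
  ultimately show "p \<in> adjacent_pairs (insert b A)" using p by blast
qed

lemma adjacent_pairs_card_sum:
  assumes "finite c" "c \<noteq> {}"
  shows "card (adjacent_pairs c) + 1 = card c \<and> (\<Sum>(x, y)\<in>adjacent_pairs c. y - x) = diam c"
  using assms
proof (induction c rule: finite_linorder_max_induct)
  case (insert b A)
  show ?case
  proof (cases "A = {}")
    case False
    have new: "(Max A, b) \<notin> adjacent_pairs A" "b \<notin> A"
      using insert.hyps(2) unfolding adjacent_pairs_def by auto
    have "Min A < b" "Max A < b" using insert.hyps(1,2) False by simp_all
    then have "Max (insert b A) = b" "Min (insert b A) = Min A"
      using insert.hyps(1) False by (simp_all add: Max_insert Min_insert)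
    then show ?thesis
      using insert False new finite_adjacent_pairs[OF insert.hyps(1)]
      by (simp add: adjacent_pairs_insert_Max diam_def)
  qed simp
qed simp

lemma diam_le_card_mult_gap:
  assumes "finite c" "c \<noteq> {}" "\<And>x y. (x, y) \<in> adjacent_pairs c \<Longrightarrow> y - x \<le> G"
  shows "diam c \<le> (real (card c) - 1) * G"
proof -
  have card: "card (adjacent_pairs c) + 1 = card c" and sum: "(\<Sum>(x, y)\<in>adjacent_pairs c. y - x) = diam c"
    using adjacent_pairs_card_sum[OF assms(1,2)] by auto
  have "diam c = (\<Sum>(x, y)\<in>adjacent_pairs c. y - x)" using sum by simp
  also have "\<dots> \<le> (\<Sum>p\<in>adjacent_pairs c. G)" using assms(3) by (intro sum_mono) auto
  also have "\<dots> = (real (card c) - 1) * G"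
    using card by (simp add: algebra_simps flip: card)
  finally show ?thesis .
qed

lemma adjacent_pairs_convex_subset:
  assumes "B \<subseteq> c" "\<And>x y w. x \<in> B \<Longrightarrow> y \<in> B \<Longrightarrow> w \<in> c \<Longrightarrow> x < w \<Longrightarrow> w < y \<Longrightarrow> w \<in> B"
  shows "adjacent_pairs B \<subseteq> adjacent_pairs c"
  using assms unfolding adjacent_pairs_def by blast

lemma adjacent_pairs_below_above:
  "adjacent_pairs (below c a) \<subseteq> adjacent_pairs c" "adjacent_pairs (above c a) \<subseteq> adjacent_pairs c"
  by (rule adjacent_pairs_convex_subset; force)+

lemma adjacent_pairs_cut:
  assumes "finite c" "(x, y) \<in> adjacent_pairs c"
  shows "\<And>w. w \<in> c \<Longrightarrow> x < w \<Longrightarrow> y \<le> w" "Max (below c x) = x" "Min (above c x) = y"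
proof -
  have xy: "x \<in> c" "y \<in> c" "x < y" "\<And>w. w \<in> c \<Longrightarrow> x < w \<Longrightarrow> w < y \<Longrightarrow> False"
    using assms(2) unfolding adjacent_pairs_def by auto
  show next_le: "\<And>w. w \<in> c \<Longrightarrow> x < w \<Longrightarrow> y \<le> w" using xy(4) by force
  show "Max (below c x) = x" using assms(1) xy(1) by (intro Max_eqI) auto
  show "Min (above c x) = y" using assms(1) xy(2,3) next_le by (intro Min_eqI) auto
qed

lemma adjacent_pairs_max_gap:
  assumes c: "finite c" "\<not> card c \<le> 1"
  obtains xs ys where "(xs, ys) \<in> adjacent_pairs c" "\<And>x y. (x, y) \<in> adjacent_pairs c \<Longrightarrow> y - x \<le> ys - xs"
proof -
  have "c \<noteq> {}" using c by auto
  then have "adjacent_pairs c \<noteq> {}" using adjacent_pairs_card_sum[OF c(1)] c(2) by auto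
  then have "Max ((\<lambda>(x, y). y - x) ` adjacent_pairs c) \<in> (\<lambda>(x, y). y - x) ` adjacent_pairs c"
    using finite_adjacent_pairs[OF c(1)] by (intro Max_in) auto
  then obtain xs ys where xs: "(xs, ys) \<in> adjacent_pairs c"
    and max: "ys - xs = Max ((\<lambda>(x, y). y - x) ` adjacent_pairs c)" by auto
  have "y - x \<le> ys - xs" if "(x, y) \<in> adjacent_pairs c" for x y
    unfolding max using that finite_adjacent_pairs[OF c(1)] by (intro Max_ge) force+
  then show ?thesis by (rule that[OF xs])
qed

section \<open>Interval weights\<close>

(* Up to factors depending only on card z, F_fun z P is the product of these weights over the blocks
   of P: see F_fun_le_weight and weight_le_F_fun. *)
function interval_weight :: "real set \<Rightarrow> real" where
  "interval_weight c = (if card c \<le> 1 then 1 else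
     Max ((\<lambda>x. interval_weight (below c x) * interval_weight (above c x) / diam c) ` (c - {Max c})))"
  by auto
termination
proof (relation "measure card")
  fix c :: "real set" and x
  assume "\<not> card c \<le> 1" and x: "x \<in> c - {Max c}"
  then have c: "finite c" "c \<noteq> {}" using card.infinite by fastforce+
  then have "Max c \<in> c" "x \<le> Max c" using x by simp_all
  then have "Max c \<in> c - below c x" using x by auto
  then show "(below c x, c) \<in> measure card" using c by (auto intro!: psubset_card_mono)
  show "(above c x, c) \<in> measure card" using c x by (auto intro!: psubset_card_mono)
qed simp

declare interval_weight.simps [simp del]

lemma interval_weight_trivial: "card c \<le> 1 \<Longrightarrow> interval_weight c = 1"
  by (simp add: interval_weight.simps)

lemma interval_weight_ge_cut:
  assumes "finite c" "x \<in> c" "x < Max c"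
  shows "interval_weight (below c x) * interval_weight (above c x) / diam c \<le> interval_weight c"
proof -
  have "Max c \<in> c" using assms by (metis Max_in empty_iff)
  then have "\<not> card c \<le> 1" using assms card_le_Suc0_iff_eq[OF assms(1)] by force
  then have "interval_weight c =
      Max ((\<lambda>x. interval_weight (below c x) * interval_weight (above c x) / diam c) ` (c - {Max c}))"
    by (simp add: interval_weight.simps[of c])
  then show ?thesis using assms by (auto intro!: Max_ge)
qed

lemma interval_weight_cut_exists:
  assumes "finite c" "\<not> card c \<le> 1"
  obtains x where "x \<in> c" "x < Max c"
    "interval_weight c = interval_weight (below c x) * interval_weight (above c x) / diam c"
proof -
  obtain y where "y \<in> c" "y \<noteq> Max c" using assms by (auto simp: card_le_Suc0_iff_eq)
  then have "c - {Max c} \<noteq> {}" by auto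
  then have "interval_weight c \<in>
      (\<lambda>x. interval_weight (below c x) * interval_weight (above c x) / diam c) ` (c - {Max c})"
    using assms by (simp add: interval_weight.simps[of c])
  then obtain x where "x \<in> c - {Max c}"
    "interval_weight c = interval_weight (below c x) * interval_weight (above c x) / diam c" by blast
  moreover have "x < Max c" using calculation(1) assms(1) by (simp add: order.not_eq_order_implies_strict)
  ultimately show ?thesis using that by blast
qed

lemma interval_weight_pos [simp]: "0 < interval_weight c"
proof (induction "card c" arbitrary: c rule: less_induct)
  case less
  show ?case
  proof (cases "card c \<le> 1")
    case False
    then have c: "finite c" using card.infinite by fastforce
    obtain x where x: "x \<in> c" "x < Max c"
      and eq: "interval_weight c = interval_weight (below c x) * interval_weight (above c x) / diam c"
      using interval_weight_cut_exists[OF c False] by blast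
    have "Max c \<in> c - below c x" using c x by (metis (no_types, lifting) DiffI Max_in empty_iff leD mem_Collect_eq)
    then have "below c x \<subset> c" "above c x \<subset> c" using x by blast+
    then have "card (below c x) < card c" "card (above c x) < card c"
      using c by (simp_all add: psubset_card_mono)
    then have "0 < interval_weight (below c x)" "0 < interval_weight (above c x)"
      using less by blast+
    moreover have "0 < diam c" using diam_pos[OF c x(1), of "Max c"] c x by (metis Max_in empty_iff less_irrefl)
    ultimately show ?thesis using eq by simp
  qed (simp add: interval_weight_trivial)
qed

lemma interval_weight_nonneg [simp]: "0 \<le> interval_weight c"
  using less_imp_le[OF interval_weight_pos] .

lemma interval_weight_cut_mult_le:
  assumes "finite c" "x \<in> c" "x < Max c"
  shows "interval_weight (below c x) * interval_weight (above c x) \<le> diam c * interval_weight c"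
proof -
  have "Max c \<in> c" using assms by (metis Max_in empty_iff)
  then have "0 < diam c" using diam_pos[OF assms(1,2)] assms(3) by simp
  then show ?thesis using interval_weight_ge_cut[OF assms] by (simp add: divide_le_eq mult.commute)
qed

lemma divide_le_of_factor_bounds:
  fixes l u m a b d D G :: real
  assumes "0 \<le> l" "0 \<le> a" "0 \<le> b" "0 < G" "0 < D" "d \<le> D"
    and "u \<le> m * b / G" "l * m \<le> d * a"
  shows "l * u / D \<le> a * b / G"
proof -
  have "l * u / D \<le> l * (m * b / G) / D"
    using assms by (intro divide_right_mono mult_left_mono) auto
  also have "\<dots> = (l * m) * b / (G * D)" by simp
  also have "\<dots> \<le> (D * a) * b / (G * D)"
    using assms by (intro divide_right_mono mult_right_mono order_trans[OF assms(8)]) auto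
  also have "\<dots> = a * b / G" using assms by simp
  finally show ?thesis .
qed

lemma gap_le_diam:
  assumes c: "finite c" and ne: "below c a \<noteq> {}" "above c a \<noteq> {}"
    and gap: "\<And>w. w \<in> c \<Longrightarrow> a < w \<Longrightarrow> a + G \<le> w"
  shows "G \<le> diam c"
proof -
  have A: "finite (below c a)" and B: "finite (above c a)" using c by auto
  have "Min (above c a) \<in> above c a" "Max (below c a) \<in> below c a"
    using Min_in[OF B ne(2)] Max_in[OF A ne(1)] .
  then have "a + G \<le> Min (above c a)" "Max (below c a) \<le> a" using gap by auto
  moreover have "0 \<le> diam (below c a)" "0 \<le> diam (above c a)" using diam_nonneg A B ne by auto
  ultimately show ?thesis using diam_cut[OF c ne] by linarith
qed

(* If the optimal cut of c is at some x \<le> a, the part of c above x straddles a and the induction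
   hypothesis applies to it; merging its lower piece back with the part of c below x costs a factor
   diam (below c a) / diam c \<le> 1.  Symmetrically if x > a. *)
lemma interval_weight_cut_le:
  assumes "finite c" "below c a \<noteq> {}" "above c a \<noteq> {}" "0 < G"
    and "\<And>w. w \<in> c \<Longrightarrow> a < w \<Longrightarrow> a + G \<le> w"
  shows "interval_weight c \<le> interval_weight (below c a) * interval_weight (above c a) / G"
  using assms
proof (induction "card c" arbitrary: c rule: less_induct)
  case less
  note c = less.prems(1) and G = less.prems(4) and gap = less.prems(5)
  define A B where "A = below c a" and "B = above c a"
  have A: "finite A" "A \<noteq> {}" and B: "finite B" "B \<noteq> {}"
    using less.prems(1-3) unfolding A_def B_def by auto
  have GD: "G \<le> diam c" using gap_le_diam[OF less.prems(1-3) gap] .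
  have "\<not> card c \<le> 1" using less.prems(2,3) card_le_Suc0_iff_eq[OF c] by force
  then obtain x where x: "x \<in> c" "x < Max c"
    and opt: "interval_weight c = interval_weight (below c x) * interval_weight (above c x) / diam c"
    using interval_weight_cut_exists[OF c] by blast
  have IH: "interval_weight M \<le> interval_weight (below M a) * interval_weight (above M a) / G"
    if "M \<subset> c" "below M a \<noteq> {}" "above M a \<noteq> {}" for M
    using less.hyps[OF psubset_card_mono[OF c that(1)]] that c G gap
    by (meson finite_subset psubset_imp_subset subsetD)
  consider (same) "below c x = A" | (left) "x \<le> a" "below c x \<noteq> A" | (right) "a < x" "below c x \<noteq> A"
    by linarith
  then show ?case
  proof cases
    case same
    have "above c x = c - below c x" "B = c - A" unfolding A_def B_def by auto
    then have "above c x = B" using same by simp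
    with same show ?thesis unfolding opt A_def[symmetric] B_def[symmetric] using G GD
      by (simp add: divide_left_mono)
  next
    case left
    define M where "M = above c x"
    have low: "below A x = below c x" and MA: "below M a = above A x" and MB: "above M a = B"
      using left(1) unfolding A_def B_def M_def by auto
    have "below c x \<subseteq> A" using left(1) unfolding A_def by auto
    then obtain w where "w \<in> A" "w \<notin> below c x" using left(2) by blast
    then have w: "w \<in> A" "x < w" unfolding A_def by auto
    have xA: "x \<in> A" "x < Max A"
      using x(1) left(1) less_le_trans[OF w(2) Max_ge[OF A(1) w(1)]] unfolding A_def by auto
    have "M \<subset> c" using x(1) unfolding M_def by auto
    then have IHM: "interval_weight M \<le> interval_weight (above A x) * interval_weight B / G"
      using IH[of M] w B(2) unfolding MA MB by auto
    have "interval_weight (below A x) * interval_weight (above A x) \<le> diam A * interval_weight A"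
      by (rule interval_weight_cut_mult_le[OF A(1) xA])
    moreover have "diam A \<le> diam c" using diam_mono[OF c _ A(2)] unfolding A_def by auto
    ultimately show ?thesis
      using divide_le_of_factor_bounds[OF _ _ _ G _ _ IHM] G GD
      unfolding opt A_def[symmetric] B_def[symmetric] M_def[symmetric] low[symmetric] by simp
  next
    case right
    define M where "M = below c x"
    have up: "above B x = above c x" and MA: "below M a = A" and MB: "above M a = below B x"
      using right(1) unfolding A_def B_def M_def by auto
    have "A \<subseteq> below c x" using right(1) unfolding A_def by auto
    then obtain w where "w \<in> below c x" "w \<notin> A" using right(2) by blast
    then have w: "w \<in> B" "w \<le> x" unfolding A_def B_def by auto
    have xB: "x \<in> B" "x < Max B" using x right(1) Max_above[OF c less.prems(3)] unfolding B_def by auto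
    have "Max c \<in> c" using x(1) c by (metis Max_in empty_iff)
    moreover have "Max c \<notin> M" using x(2) unfolding M_def by auto
    ultimately have "M \<subset> c" unfolding M_def by blast
    then have IHM: "interval_weight M \<le> interval_weight (below B x) * interval_weight A / G"
      using IH[of M] w A(2) unfolding MA MB by (auto simp: mult.commute)
    have "interval_weight (above B x) * interval_weight (below B x) \<le> diam B * interval_weight B"
      using interval_weight_cut_mult_le[OF B(1) xB] by (simp add: mult.commute)
    moreover have "diam B \<le> diam c" using diam_mono[OF c _ B(2)] unfolding B_def by auto
    ultimately have "interval_weight (above c x) * interval_weight M / diam c
        \<le> interval_weight B * interval_weight A / G"
      using divide_le_of_factor_bounds[OF _ _ _ G _ _ IHM] G GD unfolding up by simp
    then show ?thesis unfolding opt A_def[symmetric] B_def[symmetric] M_def[symmetric]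
      by (simp add: mult.commute)
  qed
qed

lemma interval_weight_trivial_split:
  assumes "A \<union> B = S" "A = {} \<or> B = {}"
  shows "interval_weight A * interval_weight B = interval_weight S"
  using assms by (auto simp: interval_weight_trivial)

lemma interval_weight_le_straddle:
  assumes "finite Z" "0 < G" "\<And>w. w \<in> Z \<Longrightarrow> a < w \<Longrightarrow> a + G \<le> w"
  shows "interval_weight Z
    \<le> interval_weight (below Z a) * interval_weight (above Z a) / G ^ of_bool (below Z a \<noteq> {} \<and> above Z a \<noteq> {})"
proof (cases "below Z a \<noteq> {} \<and> above Z a \<noteq> {}")
  case True
  then show ?thesis using interval_weight_cut_le[OF assms(1) _ _ assms(2,3)] by simp
next
  case False
  have "below Z a \<union> above Z a = Z" by auto
  then show ?thesis using interval_weight_trivial_split[of "below Z a" "above Z a" Z] False by auto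
qed

fun pair_split_const :: "nat \<Rightarrow> real" where
  "pair_split_const 0 = 1"
| "pair_split_const (Suc m) = (real (Suc m) * pair_split_const m)\<^sup>2"

lemma pair_split_const_ge_1: "1 \<le> pair_split_const m"
proof (induction m)
  case (Suc m)
  have "1 * 1 \<le> real (Suc m) * pair_split_const m" using Suc by (intro mult_mono) auto
  then show ?case by (simp add: one_le_power)
qed simp

lemma pair_split_const_mono:
  assumes "m \<le> m'"
  shows "pair_split_const m \<le> pair_split_const m'"
  using assms
proof (induction m' rule: dec_induct)
  case (step m')
  have "pair_split_const m' \<le> real (Suc m') * pair_split_const m'"
    using pair_split_const_ge_1[of m'] by simp
  also have "\<dots> \<le> (real (Suc m') * pair_split_const m')\<^sup>2"
    using pair_split_const_ge_1[of m'] mult_mono[of 1 "real (Suc m')" 1 "pair_split_const m'"]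
    by (simp add: power2_eq_square)
  finally show ?case using step by simp
qed simp

(* Cut c at its largest gap G.  A part meeting both sides loses a factor G
   (interval_weight_le_straddle), each side has diameter at most (card c - 1) * G, and the number of
   parts meeting both sides equals the number of sides met by both parts. *)
lemma interval_weight_pair_le:
  assumes "finite c" "X \<union> Y = c" "X \<inter> Y = {}" "X \<noteq> {}" "Y \<noteq> {}"
  shows "interval_weight X * interval_weight Y \<le> pair_split_const (card c) * diam c * interval_weight c"
  using assms
proof (induction "card c" arbitrary: c X Y rule: less_induct)
  case less
  note c = less.prems(1) and XY = less.prems(2-5)
  obtain x y where "x \<in> c" "y \<in> c" "x \<noteq> y" using XY by blast
  then have "\<not> card c \<le> 1" using card_le_Suc0_iff_eq[OF c] by force
  then obtain m where m: "card c = Suc m" "1 \<le> m" by (cases "card c") auto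
  have "c \<noteq> {}" using \<open>x \<in> c\<close> by blast
  obtain xs ys where adj: "(xs, ys) \<in> adjacent_pairs c"
    and max_gap: "\<And>x y. (x, y) \<in> adjacent_pairs c \<Longrightarrow> y - x \<le> ys - xs"
    using adjacent_pairs_max_gap[OF c \<open>\<not> card c \<le> 1\<close>] by blast
  define G where "G = ys - xs"
  define L U where "L = below c xs" and "U = above c xs"
  have xs: "xs \<in> c" "xs < ys" "ys \<in> c" using adj unfolding adjacent_pairs_def by auto
  then have G: "0 < G" unfolding G_def by simp
  have LU: "L \<union> U = c" "L \<inter> U = {}" "xs \<in> L" "ys \<in> U" using xs unfolding L_def U_def by auto
  then have LU_sub: "L \<subset> c" "U \<subset> c" by blast+
  define s :: "real set \<Rightarrow> nat" where "s Z = of_bool (Z \<inter> L \<noteq> {} \<and> Z \<inter> U \<noteq> {})" for Z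
  define t :: "real set \<Rightarrow> nat" where "t S = of_bool (X \<inter> S \<noteq> {} \<and> Y \<inter> S \<noteq> {})" for S
  have cut: "interval_weight Z \<le> interval_weight (Z \<inter> L) * interval_weight (Z \<inter> U) / G ^ s Z"
    if "Z \<subseteq> c" for Z
  proof -
    have "below Z xs = Z \<inter> L" "above Z xs = Z \<inter> U" using that unfolding L_def U_def by auto
    moreover have "xs + G \<le> w" if w: "w \<in> Z" "xs < w" for w
      using adjacent_pairs_cut(1)[OF c adj, of w] w \<open>Z \<subseteq> c\<close> unfolding G_def by auto
    ultimately show ?thesis using interval_weight_le_straddle[of Z G xs] finite_subset[OF that c] G
      unfolding s_def by simp
  qed
  define B where "B = real m * pair_split_const m"
  have B: "1 \<le> B" unfolding B_def using m pair_split_const_ge_1[of m] mult_mono[of 1 "real m" 1] by simp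
  have side: "interval_weight (X \<inter> S) * interval_weight (Y \<inter> S) \<le> (B * G) ^ t S * interval_weight S"
    if S: "S \<subset> c" "adjacent_pairs S \<subseteq> adjacent_pairs c" for S
  proof (cases "X \<inter> S \<noteq> {} \<and> Y \<inter> S \<noteq> {}")
    case True
    have S': "finite S" "S \<noteq> {}" "card S \<le> m"
      using finite_subset[OF psubset_imp_subset[OF S(1)] c] True psubset_card_mono[OF c S(1)] m by auto
    have "interval_weight (X \<inter> S) * interval_weight (Y \<inter> S)
        \<le> pair_split_const (card S) * diam S * interval_weight S"
    proof (rule less.hyps[OF psubset_card_mono[OF c S(1)] S'(1)])
      show "X \<inter> S \<union> Y \<inter> S = S" using S(1) XY(1) by blast
    qed (use True XY(2) in auto)
    also have "\<dots> \<le> (B * G) * interval_weight S"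
    proof (intro mult_right_mono)
      have "diam S \<le> (real (card S) - 1) * G"
        using diam_le_card_mult_gap[OF S'(1,2)] max_gap S(2) unfolding G_def by blast
      also have "\<dots> \<le> real m * G" using S'(3) G by (intro mult_right_mono) auto
      finally have "pair_split_const (card S) * diam S \<le> pair_split_const m * (real m * G)"
        using pair_split_const_mono[OF S'(3)] pair_split_const_ge_1[of m] diam_nonneg[OF S'(1,2)]
        by (intro mult_mono) auto
      then show "pair_split_const (card S) * diam S \<le> B * G" unfolding B_def by (simp add: mult_ac)
    qed simp
    finally show ?thesis using True by (simp add: t_def)
  next
    case False
    have "X \<inter> S \<union> Y \<inter> S = S" using S(1) XY(1) by blast
    then show ?thesis using interval_weight_trivial_split[of "X \<inter> S" "Y \<inter> S" S] False by (auto simp: t_def)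
  qed
  have count: "s X + s Y = t L + t U"
  proof -
    have "of_bool (P \<and> Q) + of_bool (R \<and> T) = of_bool (P \<and> R) + (of_bool (Q \<and> T) :: nat)"
      if "P \<or> Q" "R \<or> T" "P \<or> R" "Q \<or> T" for P Q R T using that by auto
    moreover have "X \<inter> L \<noteq> {} \<or> X \<inter> U \<noteq> {}" "Y \<inter> L \<noteq> {} \<or> Y \<inter> U \<noteq> {}"
      "X \<inter> L \<noteq> {} \<or> Y \<inter> L \<noteq> {}" "X \<inter> U \<noteq> {} \<or> Y \<inter> U \<noteq> {}"
      using XY LU by blast+
    ultimately show ?thesis unfolding s_def t_def by (simp add: Int_commute)
  qed
  have wXY: "interval_weight X * interval_weight Y
      \<le> (interval_weight (X \<inter> L) * interval_weight (X \<inter> U) / G ^ s X)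
       * (interval_weight (Y \<inter> L) * interval_weight (Y \<inter> U) / G ^ s Y)"
    using cut[of X] cut[of Y] XY(1) G by (intro mult_mono) auto
  also have "\<dots> = (interval_weight (X \<inter> L) * interval_weight (Y \<inter> L))
       * (interval_weight (X \<inter> U) * interval_weight (Y \<inter> U)) / G ^ (t L + t U)"
    by (simp add: power_add flip: count)
  also have "\<dots> \<le> ((B * G) ^ t L * interval_weight L) * ((B * G) ^ t U * interval_weight U) / G ^ (t L + t U)"
  proof (rule divide_right_mono[OF mult_mono])
    show "interval_weight (X \<inter> L) * interval_weight (Y \<inter> L) \<le> (B * G) ^ t L * interval_weight L"
      using side[OF LU_sub(1)] adjacent_pairs_below_above(1) unfolding L_def by blast
    show "interval_weight (X \<inter> U) * interval_weight (Y \<inter> U) \<le> (B * G) ^ t U * interval_weight U"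
      using side[OF LU_sub(2)] adjacent_pairs_below_above(2) unfolding U_def by blast
  qed (use B G in auto)
  also have "\<dots> = B ^ (t L + t U) * (interval_weight L * interval_weight U)"
    using G by (simp add: power_mult_distrib power_add)
  also have "\<dots> \<le> B\<^sup>2 * (diam c * interval_weight c)"
  proof (rule mult_mono)
    show "B ^ (t L + t U) \<le> B\<^sup>2" using B by (intro power_increasing) (auto simp: t_def)
    have "xs < Max c" using xs c by (simp add: less_le_trans[OF xs(2)])
    then show "interval_weight L * interval_weight U \<le> diam c * interval_weight c"
      unfolding L_def U_def by (rule interval_weight_cut_mult_le[OF c xs(1)])
  qed (use B in auto)
  also have "\<dots> \<le> pair_split_const (card c) * diam c * interval_weight c"
  proof -
    have "B\<^sup>2 \<le> pair_split_const (card c)" unfolding B_def m(1) using pair_split_const_ge_1[of m]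
      by (simp add: power_mult_distrib mult_right_mono power_mono)
    then show ?thesis using diam_nonneg[OF c] \<open>c \<noteq> {}\<close> by (simp add: mult.assoc mult_right_mono)
  qed
  finally show ?case .
qed

section \<open>Partitions, merges and splits\<close>

lemma partition_blocks:
  assumes "finite z" "partition_on z P"
  shows "finite P" and "\<And>b. b \<in> P \<Longrightarrow> finite b \<and> b \<noteq> {} \<and> b \<subseteq> z"
  using finite_elements[OF assms] partition_onD1[OF assms(2)] partition_onD3[OF assms(2)] assms(1)
  by (auto intro: finite_subset)

lemma partition_blocks_disjoint:
  "partition_on z P \<Longrightarrow> b1 \<in> P \<Longrightarrow> b2 \<in> P \<Longrightarrow> b1 \<noteq> b2 \<Longrightarrow> b1 \<inter> b2 = {}"
  unfolding partition_on_def disjoint_def by blast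

lemma partition_on_replace_blocks:
  assumes P: "partition_on A P" and S: "S \<subseteq> P" and Q: "partition_on (\<Union>S) Q"
  shows "partition_on A (Q \<union> (P - S))"
proof (rule partition_onI)
  have "\<Union>(Q \<union> (P - S)) = \<Union>S \<union> \<Union>(P - S)" using partition_onD1[OF Q] by auto
  also have "\<dots> = \<Union>P" using S by blast
  finally show "\<Union>(Q \<union> (P - S)) = A" using partition_onD1[OF P] by simp
  show "{} \<notin> Q \<union> (P - S)" using partition_onD3[OF P] partition_onD3[OF Q] by auto
  fix p q assume pq: "p \<in> Q \<union> (P - S)" "q \<in> Q \<union> (P - S)" "p \<noteq> q"
  have inner: "p \<subseteq> \<Union>S" if "p \<in> Q" for p using that partition_onD1[OF Q] by auto
  have outer: "disjnt p (\<Union>S)" if "p \<in> P - S" for p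
    using that S partition_blocks_disjoint[OF P] by (auto simp: disjnt_def)
  consider "p \<in> Q" "q \<in> Q" | "p \<in> Q" "q \<in> P - S" | "p \<in> P - S" "q \<in> Q" | "p \<in> P - S" "q \<in> P - S"
    using pq(1,2) by blast
  then show "disjnt p q"
  proof cases
    case 1 then show ?thesis using pairwiseD[OF partition_onD2[OF Q]] pq(3) by blast
  next
    case 2 then show ?thesis using inner outer disjnt_subset1 disjnt_sym by metis
  next
    case 3 then show ?thesis using inner outer disjnt_subset2 by metis
  next
    case 4 then show ?thesis using pairwiseD[OF partition_onD2[OF P]] pq(3) by blast
  qed
qed

lemma card_replace_blocks:
  assumes P: "finite P" "partition_on A P" and S: "S \<subseteq> P" and Q: "finite Q" "partition_on (\<Union>S) Q"
  shows "card (Q \<union> (P - S)) + card S = card Q + card P"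
proof -
  have "q \<notin> P - S" if "q \<in> Q" for q
  proof
    assume "q \<in> P - S"
    moreover have "q \<noteq> {}" "q \<subseteq> \<Union>S" using that partition_onD1[OF Q(2)] partition_onD3[OF Q(2)] by auto
    ultimately show False using S partition_blocks_disjoint[OF P(2)] by blast
  qed
  then have "card (Q \<union> (P - S)) = card Q + card (P - S)"
    using P Q by (intro card_Un_disjoint) auto
  moreover have "card S \<le> card P" using P(1) S by (rule card_mono)
  ultimately show ?thesis using P(1) S by (simp add: card_Diff_subset finite_subset)
qed

lemma card_partition_le:
  assumes "finite z" "partition_on z P"
  shows "card P \<le> card z"
proof -
  have "card P = (\<Sum>b\<in>P. 1)" by simp
  also have "\<dots> \<le> (\<Sum>b\<in>P. card b)"
    using partition_blocks[OF assms] by (intro sum_mono) (auto simp: Suc_leI card_gt_0_iff)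
  also have "\<dots> = card z" using product_partition[OF assms(2)] partition_blocks[OF assms] by simp
  finally show ?thesis .
qed

lemma partition_pi0: "partition_on z (pi0 z)"
  unfolding pi0_def by (rule partition_on_singletons)

lemma pi0_in_partitions_of: "pi0 z \<in> partitions_of z"
  by (simp add: partitions_of_def partition_pi0)

lemma card_pi0 [simp]: "card (pi0 z) = card z"
  unfolding pi0_def by (simp add: card_image)

lemma cover_length_pi0 [simp]: "cover_length (pi0 z) = 0"
  unfolding cover_length_def pi0_def by (auto intro!: sum.neutral)

lemma card_partition_eq_imp_pi0:
  assumes z: "finite z" and P: "partition_on z P" and card: "card P = card z"
  shows "P = pi0 z"
proof -
  note blocks = partition_blocks[OF z P]
  have "(\<Sum>b\<in>P. card b) = (\<Sum>b\<in>P. 1)"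
    using product_partition[OF P] blocks card by simp
  then have single: "card b = 1" if "b \<in> P" for b
    using sum_mono_inv[of "\<lambda>_. 1" P card b] that blocks by (auto simp: Suc_leI card_gt_0_iff)
  show ?thesis
  proof (intro equalityI subsetI)
    fix b assume "b \<in> P"
    then obtain x where "b = {x}" "x \<in> z" using single blocks by (metis card_1_singletonE insert_subset)
    then show "b \<in> pi0 z" unfolding pi0_def by simp
  next
    fix b assume "b \<in> pi0 z"
    then obtain x where x: "x \<in> z" "b = {x}" unfolding pi0_def by auto
    then obtain c where "c \<in> P" "x \<in> c" using partition_onD1[OF P] by blast
    then show "b \<in> P" using single x by (metis card_1_singletonE singletonD)
  qed
qed

lemma card_lt_if_not_pi0:
  assumes "finite z" "partition_on z q" "q \<noteq> pi0 z"
  shows "card q < card z"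
  using card_partition_le[OF assms(1,2)] card_partition_eq_imp_pi0[OF assms(1,2)] assms(3) by fastforce

lemma Max_abs_diff_eq_diam:
  assumes "finite b" "b \<noteq> {}"
  shows "Max {\<bar>x - y\<bar> | x y. x \<in> b \<and> y \<in> b} = diam b"
proof (rule Max_eqI)
  have "{\<bar>x - y\<bar> | x y. x \<in> b \<and> y \<in> b} = (\<lambda>(x, y). \<bar>x - y\<bar>) ` (b \<times> b)" by auto
  then show "finite {\<bar>x - y\<bar> | x y. x \<in> b \<and> y \<in> b}" using assms by simp
  show "d \<le> diam b" if "d \<in> {\<bar>x - y\<bar> | x y. x \<in> b \<and> y \<in> b}" for d
    using that diam_ge_dist[OF assms(1)] by auto
  have "diam b = \<bar>Max b - Min b\<bar>" "Max b \<in> b" "Min b \<in> b"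
    using diam_nonneg[OF assms] assms by (simp_all add: diam_def)
  then show "diam b \<in> {\<bar>x - y\<bar> | x y. x \<in> b \<and> y \<in> b}" by blast
qed

lemma cover_length_eq_sum_diam:
  assumes "finite z" "partition_on z P"
  shows "cover_length P = (\<Sum>b\<in>P. diam b)"
  unfolding cover_length_def using partition_blocks[OF assms] Max_abs_diff_eq_diam
  by (intro sum.cong) auto

lemma cover_length_nonneg:
  assumes "finite z" "partition_on z P"
  shows "0 \<le> cover_length P"
  unfolding cover_length_eq_sum_diam[OF assms] using partition_blocks[OF assms] diam_nonneg
  by (intro sum_nonneg) auto

lemma min_dist_le:
  assumes "finite z" "x \<in> z" "y \<in> z" "x \<noteq> y"
  shows "0 < min_dist z" "min_dist z \<le> \<bar>x - y\<bar>"
proof -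
  define D where "D = {\<bar>x - y\<bar> | x y. x \<in> z \<and> y \<in> z \<and> x \<noteq> y}"
  have "D \<subseteq> (\<lambda>(x, y). \<bar>x - y\<bar>) ` (z \<times> z)" unfolding D_def by auto
  then have D: "finite D" "D \<noteq> {}" using assms finite_subset unfolding D_def by fastforce+
  show "0 < min_dist z" using Min_in[OF D] unfolding min_dist_def D_def[symmetric] by (auto simp: D_def)
  have "\<bar>x - y\<bar> \<in> D" unfolding D_def using assms by blast
  then show "min_dist z \<le> \<bar>x - y\<bar>" unfolding min_dist_def D_def[symmetric] by (rule Min_le[OF D(1)])
qed

lemma partition_nonsingleton_block:
  assumes "finite z" "partition_on z q" "q \<noteq> pi0 z"
  obtains c x y where "c \<in> q" "x \<in> c" "y \<in> c" "x \<noteq> y"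
proof -
  note blocks = partition_blocks[OF assms(1,2)]
  have "card q \<noteq> card z" using card_partition_eq_imp_pi0[OF assms(1,2)] assms(3) by blast
  have "\<exists>c\<in>q. card c \<noteq> 1"
  proof (rule ccontr)
    assume "\<not> (\<exists>c\<in>q. card c \<noteq> 1)"
    then have "card z = card q" using product_partition[OF assms(2)] blocks by simp
    then show False using \<open>card q \<noteq> card z\<close> by simp
  qed
  then obtain c where c: "c \<in> q" "card c \<noteq> 1" by blast
  then have "0 < card c" using blocks(2)[OF c(1)] by (simp add: card_gt_0_iff)
  then have "\<not> card c \<le> 1" using c(2) by simp
  then show ?thesis using that c(1) card_le_Suc0_iff_eq[of c] blocks(2)[OF c(1)] by auto
qed

lemma cover_length_ge_min_dist:
  assumes "finite z" "partition_on z q" "q \<noteq> pi0 z"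
  shows "0 < min_dist z" "min_dist z \<le> cover_length q"
proof -
  obtain c x y where c: "c \<in> q" "x \<in> c" "y \<in> c" "x \<noteq> y"
    using partition_nonsingleton_block[OF assms] .
  note blocks = partition_blocks[OF assms(1,2)]
  have xy: "x \<in> z" "y \<in> z" using c blocks by auto
  show "0 < min_dist z" using min_dist_le(1)[OF assms(1) xy c(4)] .
  have "\<bar>x - y\<bar> \<le> diam c" using diam_ge_dist[of c x y] c blocks(2)[OF c(1)] by simp
  then have "min_dist z \<le> diam c" using min_dist_le(2)[OF assms(1) xy c(4)] by simp
  also have "\<dots> \<le> cover_length q"
    unfolding cover_length_eq_sum_diam[OF assms(1,2)] using blocks c(1) diam_nonneg
    by (intro member_le_sum) auto
  finally show "min_dist z \<le> cover_length q" .
qed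

lemma partition_merge_blocks:
  assumes "partition_on z P" "b1 \<in> P" "b2 \<in> P"
  shows "partition_on z (merge_blocks P b1 b2)"
proof -
  have "partition_on (\<Union>{b1, b2}) {b1 \<union> b2}"
    using partition_on_space[of "b1 \<union> b2"] partition_onD3[OF assms(1)] assms(2) by auto
  from partition_on_replace_blocks[OF assms(1) _ this] assms(2,3) show ?thesis
    by (simp add: merge_blocks_def)
qed

lemma card_merge_blocks:
  assumes "finite z" "partition_on z P" "b1 \<in> P" "b2 \<in> P" "b1 \<noteq> b2"
  shows "card (merge_blocks P b1 b2) + 1 = card P"
proof -
  have "partition_on (\<Union>{b1, b2}) {b1 \<union> b2}"
    using partition_on_space[of "b1 \<union> b2"] partition_onD3[OF assms(2)] assms(3) by auto
  then show ?thesis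
    using card_replace_blocks[OF finite_elements[OF assms(1,2)] assms(2), of "{b1, b2}" "{b1 \<union> b2}"] assms(3-5)
    by (simp add: merge_blocks_def)
qed

lemma merge_blocks_union_notin:
  assumes "partition_on z P" "b1 \<in> P" "b2 \<in> P" "b1 \<noteq> b2"
  shows "b1 \<union> b2 \<notin> P"
proof
  assume u: "b1 \<union> b2 \<in> P"
  obtain x where "x \<in> b2" using partition_onD3[OF assms(1)] assms(3) by fastforce
  then have "(b1 \<union> b2) \<inter> b2 \<noteq> {}" by auto
  then have "b1 \<union> b2 = b2" using partition_blocks_disjoint[OF assms(1) u assms(3)] by auto
  moreover obtain y where "y \<in> b1" using partition_onD3[OF assms(1)] assms(2) by fastforce
  ultimately have "y \<in> b1 \<inter> b2" by auto
  then show False using partition_blocks_disjoint[OF assms(1-4)] by simp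
qed

lemma is_merge_partition: "partition_on z r \<Longrightarrow> is_merge r q \<Longrightarrow> partition_on z q"
  unfolding is_merge_def using partition_merge_blocks by blast

lemma card_is_merge: "finite z \<Longrightarrow> partition_on z r \<Longrightarrow> is_merge r q \<Longrightarrow> card q + 1 = card r"
  unfolding is_merge_def using card_merge_blocks by blast

lemma split_events_eq:
  "split_events P Q = {(b, x, y). b \<in> P \<and> (x, y) \<in> adjacent_pairs b \<and> Q = split_block P b x y}"
  unfolding split_events_def adjacent_pairs_def by auto

lemma split_block_adjacent:
  assumes "(x, y) \<in> adjacent_pairs b"
  shows "split_block P b x y = {below b x, above b x} \<union> (P - {b})"
proof -
  have "{w \<in> b. y \<le> w} = above b x"
    using assms unfolding adjacent_pairs_def by (auto simp: not_less[symmetric])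
  then show ?thesis unfolding split_block_def by auto
qed

lemma partition_adjacent_cut:
  assumes "(x, y) \<in> adjacent_pairs b"
  shows "partition_on b {below b x, above b x}" "below b x \<noteq> above b x"
proof -
  have "x \<in> below b x" "y \<in> above b x" using assms unfolding adjacent_pairs_def by auto
  then show "below b x \<noteq> above b x" by auto
  show "partition_on b {below b x, above b x}"
  proof (rule partition_onI)
    show "\<Union>{below b x, above b x} = b" by auto
    show "{} \<notin> {below b x, above b x}" using \<open>x \<in> below b x\<close> \<open>y \<in> above b x\<close> by auto
  qed (auto simp: disjnt_def)
qed

lemma partition_split_block:
  assumes "partition_on z P" "b \<in> P" "(x, y) \<in> adjacent_pairs b"
  shows "partition_on z (split_block P b x y)"
proof -
  have "partition_on (\<Union>{b}) {below b x, above b x}" using partition_adjacent_cut(1)[OF assms(3)] by simp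
  from partition_on_replace_blocks[OF assms(1) _ this] assms(2) show ?thesis
    unfolding split_block_adjacent[OF assms(3)] by simp
qed

lemma card_split_block:
  assumes "finite z" "partition_on z P" "b \<in> P" "(x, y) \<in> adjacent_pairs b"
  shows "card (split_block P b x y) = card P + 1"
proof -
  have "partition_on (\<Union>{b}) {below b x, above b x}" using partition_adjacent_cut(1)[OF assms(4)] by simp
  from card_replace_blocks[OF finite_elements[OF assms(1,2)] assms(2) _ _ this] assms(3)
  show ?thesis using partition_adjacent_cut(2)[OF assms(4)] unfolding split_block_adjacent[OF assms(4)] by simp
qed

lemma card_split_event:
  assumes "finite z" "partition_on z r" "split_events r q \<noteq> {}"
  shows "card q = card r + 1"
  using assms(3) card_split_block[OF assms(1,2)] unfolding split_events_eq by auto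

lemma split_events_pi0 [simp]: "split_events (pi0 z) q = {}"
  unfolding split_events_def pi0_def by auto

section \<open>Transition rates of the ancestral recombination graph\<close>

lemma merge_events_card:
  assumes r: "partition_on z r" and m: "is_merge r q"
  shows "card (merge_events r q) = 1"
proof -
  define C where "C = {b \<in> r. b \<subseteq> \<Union>(q - r)}"
  have canonical: "A = C" if A: "A \<in> merge_events r q" for A
  proof -
    obtain b1 b2 where b: "A = {b1, b2}" "b1 \<in> r" "b2 \<in> r" "b1 \<noteq> b2" "q = merge_blocks r b1 b2"
      using A unfolding merge_events_def by auto
    have "q - r = {b1 \<union> b2}"
      using merge_blocks_union_notin[OF r b(2-4)] unfolding b(5) merge_blocks_def by auto
    moreover have "b = b1 \<or> b = b2" if bb: "b \<in> r" "b \<subseteq> b1 \<union> b2" for b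
    proof -
      obtain w where "w \<in> b" using partition_onD3[OF r] bb(1) by fastforce
      then have "b \<inter> b1 \<noteq> {} \<or> b \<inter> b2 \<noteq> {}" using bb(2) by auto
      then show ?thesis using partition_blocks_disjoint[OF r bb(1)] b(2,3) by auto
    qed
    ultimately show ?thesis unfolding C_def using b(1-3) by auto
  qed
  obtain b1 b2 where "b1 \<in> r" "b2 \<in> r" "b1 \<noteq> b2" "q = merge_blocks r b1 b2"
    using m unfolding is_merge_def by blast
  then have "{b1, b2} \<in> merge_events r q" unfolding merge_events_def by auto
  then have "merge_events r q = {C}" using canonical by auto
  then show ?thesis by simp
qed

lemma arg_rate_merge:
  assumes "finite z" "partition_on z r" "is_merge r q"
  shows "arg_rate \<rho> r q = 1"
proof -
  have "split_events r q = {}"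
  proof (rule ccontr)
    assume "split_events r q \<noteq> {}"
    then show False using card_split_event[OF assms(1,2)] card_is_merge[OF assms] by simp
  qed
  then show ?thesis using merge_events_card[OF assms(2,3)] unfolding arg_rate_def by simp
qed

lemma merge_events_nonempty_iff: "merge_events r q \<noteq> {} \<longleftrightarrow> is_merge r q"
  unfolding merge_events_def is_merge_def by auto

lemma arg_rate_nonzero_cases:
  assumes "arg_rate \<rho> r q \<noteq> 0"
  shows "is_merge r q \<or> split_events r q \<noteq> {}"
  using assms merge_events_nonempty_iff[of r q] unfolding arg_rate_def by auto

lemma arg_rate_nonneg: "0 \<le> \<rho> \<Longrightarrow> 0 \<le> arg_rate \<rho> P Q"
  unfolding arg_rate_def split_events_def
  by (intro add_nonneg_nonneg sum_nonneg) (auto intro!: mult_nonneg_nonneg)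

lemma arg_jump_nonneg: "0 \<le> \<rho> \<Longrightarrow> 0 \<le> arg_jump z \<rho> P Q"
  unfolding arg_jump_def arg_total_rate_def using arg_rate_nonneg by (simp add: sum_nonneg)

lemma arg_jump_le_1:
  assumes "finite z" "Q \<in> partitions_of z" "0 \<le> \<rho>"
  shows "arg_jump z \<rho> P Q \<le> 1"
proof (cases "Q = P")
  case False
  then have "arg_rate \<rho> P Q \<le> arg_total_rate z \<rho> P"
    unfolding arg_total_rate_def using assms finitely_many_partition_on[OF assms(1)] arg_rate_nonneg
    by (intro member_le_sum) (auto simp: partitions_of_def)
  then show ?thesis unfolding arg_jump_def using False arg_rate_nonneg[OF assms(3), of P Q]
    by (auto simp: divide_le_eq_1)
qed (simp add: arg_jump_def)

lemma sum_card_merge_events: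
  assumes z: "finite z" and r: "partition_on z r"
  shows "(\<Sum>Q\<in>partitions_of z - {r}. real (card (merge_events r Q))) = real (card r choose 2)"
proof -
  define pairs where "pairs = {A. A \<subseteq> r \<and> card A = 2}"
  define merged where "merged A = insert (\<Union>A) (r - A)" for A
  have fr: "finite r" using partition_blocks(1)[OF z r] .
  have pair_iff: "A \<in> pairs \<longleftrightarrow> (\<exists>b1 b2. A = {b1, b2} \<and> b1 \<in> r \<and> b2 \<in> r \<and> b1 \<noteq> b2)" for A
    unfolding pairs_def by (auto simp: card_2_iff)
  have merge_eq: "merge_events r Q = {A \<in> pairs. merged A = Q}" for Q
    unfolding merge_events_def pair_iff merged_def merge_blocks_def by auto
  have "merged ` pairs \<subseteq> partitions_of z - {r}"
  proof
    fix Q assume "Q \<in> merged ` pairs"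
    then obtain A where "A \<in> pairs" "Q = merged A" by blast
    then obtain b1 b2 where b: "b1 \<in> r" "b2 \<in> r" "b1 \<noteq> b2" "Q = merge_blocks r b1 b2"
      unfolding pair_iff merged_def merge_blocks_def by auto
    then show "Q \<in> partitions_of z - {r}"
      using partition_merge_blocks[OF r b(1,2)] card_merge_blocks[OF z r b(1-3)] by (auto simp: partitions_of_def)
  qed
  then have "(\<Sum>Q\<in>partitions_of z - {r}. real (card (merge_events r Q))) = (\<Sum>A\<in>pairs. 1)"
    unfolding merge_eq using sum.group[of pairs "partitions_of z - {r}" merged "\<lambda>_. 1 :: real"] fr
      finitely_many_partition_on[OF z] by (simp add: pairs_def partitions_of_def)
  also have "\<dots> = real (card r choose 2)" unfolding pairs_def using n_subsets[OF fr] by simp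
  finally show ?thesis .
qed

lemma sum_split_events_rate:
  assumes z: "finite z" and r: "partition_on z r"
  shows "(\<Sum>Q\<in>partitions_of z - {r}. \<Sum>(b, x, y)\<in>split_events r Q. \<rho> * (y - x)) = \<rho> * cover_length r"
proof -
  define cuts where "cuts = Sigma r adjacent_pairs"
  define cut where "cut = (\<lambda>(b, x, y). split_block r b x y)"
  note blocks = partition_blocks[OF z r]
  have f_cuts: "finite cuts" unfolding cuts_def using blocks finite_adjacent_pairs by auto
  have split_eq: "split_events r Q = {e \<in> cuts. cut e = Q}" for Q
    unfolding split_events_eq cuts_def cut_def by auto
  have "cut ` cuts \<subseteq> partitions_of z - {r}"
  proof
    fix Q assume "Q \<in> cut ` cuts"
    then obtain b x y where e: "b \<in> r" "(x, y) \<in> adjacent_pairs b" "Q = split_block r b x y"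
      unfolding cut_def cuts_def by auto
    then show "Q \<in> partitions_of z - {r}"
      using partition_split_block[OF r e(1,2)] card_split_block[OF z r e(1,2)] by (auto simp: partitions_of_def)
  qed
  then have "(\<Sum>Q\<in>partitions_of z - {r}. \<Sum>(b, x, y)\<in>split_events r Q. \<rho> * (y - x))
      = (\<Sum>(b, x, y)\<in>cuts. \<rho> * (y - x))"
    unfolding split_eq using finitely_many_partition_on[OF z]
    by (intro sum.group[OF f_cuts]) (auto simp: partitions_of_def)
  also have "\<dots> = (\<Sum>b\<in>r. \<rho> * (\<Sum>(x, y)\<in>adjacent_pairs b. y - x))"
    unfolding cuts_def using blocks finite_adjacent_pairs
    by (subst sum.Sigma[symmetric]) (auto simp: case_prod_beta sum_distrib_left)
  also have "\<dots> = \<rho> * cover_length r"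
    using adjacent_pairs_card_sum blocks by (simp add: cover_length_eq_sum_diam[OF z r] sum_distrib_left)
  finally show ?thesis .
qed

lemma arg_total_rate_eq:
  assumes "finite z" "partition_on z r"
  shows "arg_total_rate z \<rho> r = real (card r choose 2) + \<rho> * cover_length r"
  unfolding arg_total_rate_def arg_rate_def sum.distrib sum_card_merge_events[OF assms]
    sum_split_events_rate[OF assms] ..

lemma arg_jump_merge:
  assumes "finite z" "partition_on z r" "is_merge r q"
  shows "arg_jump z \<rho> r q = 1 / arg_total_rate z \<rho> r"
  using card_is_merge[OF assms] arg_rate_merge[OF assms] unfolding arg_jump_def by auto

section \<open>Coalescence scenarios\<close>

definition merge_preds :: "real set \<Rightarrow> real set set \<Rightarrow> real set set set" where
  "merge_preds z q = {r \<in> partitions_of z. is_merge r q}"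

lemma finite_merge_preds: "finite z \<Longrightarrow> finite (merge_preds z q)"
  unfolding merge_preds_def partitions_of_def by (rule finite_subset[OF _ finitely_many_partition_on]) auto

lemma merge_preds_card:
  assumes "finite z" "r \<in> merge_preds z q"
  shows "partition_on z r" "card q + 1 = card r"
  using assms card_is_merge unfolding merge_preds_def partitions_of_def by auto

lemma scenarios_nth:
  assumes z: "finite z" and s: "s \<in> scenarios z P" and i: "i < length s"
  shows "partition_on z (s ! i)" "card (s ! i) + i = card z"
proof -
  have "partition_on z (s ! i) \<and> card (s ! i) + i = card z" using i
  proof (induction i)
    case 0
    have "s ! 0 = pi0 z" using s unfolding scenarios_def by (auto simp: hd_conv_nth)
    then show ?case using partition_pi0 by simp
  next
    case (Suc i)
    then have IH: "partition_on z (s ! i)" "card (s ! i) + i = card z" by auto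
    have m: "is_merge (s ! i) (s ! Suc i)" using s Suc.prems unfolding scenarios_def by auto
    then show ?case using is_merge_partition[OF IH(1) m] card_is_merge[OF z IH(1) m] IH(2) by simp
  qed
  then show "partition_on z (s ! i)" "card (s ! i) + i = card z" by auto
qed

lemma scenarios_length:
  assumes "finite z" "s \<in> scenarios z P"
  shows "length s + card P = card z + 1"
proof -
  have "s \<noteq> []" "last s = P" using assms(2) unfolding scenarios_def by auto
  then have "card P + (length s - 1) = card z"
    using scenarios_nth(2)[OF assms, of "length s - 1"] by (simp add: last_conv_nth)
  then show ?thesis using \<open>s \<noteq> []\<close> by (cases s) auto
qed

lemma scenarios_partitions:
  assumes "finite z" "s \<in> scenarios z P"
  shows "set s \<subseteq> partitions_of z"
  using scenarios_nth(1)[OF assms] by (auto simp: in_set_conv_nth partitions_of_def)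

lemma finite_scenarios:
  assumes z: "finite z"
  shows "finite (scenarios z P)"
proof (rule finite_subset)
  show "scenarios z P \<subseteq> {s. set s \<subseteq> partitions_of z \<and> length s = card z + 1 - card P}"
    using scenarios_partitions[OF z] scenarios_length[OF z] by fastforce
  show "finite {s. set s \<subseteq> partitions_of z \<and> length s = card z + 1 - card P}"
    using finite_lists_length_eq finitely_many_partition_on[OF z] by (simp add: partitions_of_def)
qed

lemma scenarios_pi0:
  assumes "finite z"
  shows "scenarios z (pi0 z) = {[pi0 z]}"
proof (intro equalityI subsetI)
  fix s assume s: "s \<in> scenarios z (pi0 z)"
  then have "length s = 1" using scenarios_length[OF assms s] by simp
  then show "s \<in> {[pi0 z]}" using s unfolding scenarios_def by (cases s) auto
qed (auto simp: scenarios_def)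

lemma F_fun_pi0 [simp]: "finite z \<Longrightarrow> F_fun z (pi0 z) = 1"
  unfolding F_fun_def by (simp add: scenarios_pi0 energy_def)

lemma energy_snoc:
  assumes "s \<noteq> []"
  shows "energy (s @ [q]) = energy s * cover_length q"
proof -
  have "{1..<length (s @ [q])} = insert (length s) {1..<length s}" using assms by (cases s) auto
  then show ?thesis unfolding energy_def by (simp add: nth_append mult.commute)
qed

lemma scenarios_snoc:
  assumes z: "finite z" and q: "q \<noteq> pi0 z"
  shows "scenarios z q = (\<lambda>s. s @ [q]) ` (\<Union>r\<in>merge_preds z q. scenarios z r)"
proof (intro equalityI subsetI)
  fix s' assume s': "s' \<in> scenarios z q"
  then have p: "s' \<noteq> []" "hd s' = pi0 z" "last s' = q"
    and chain: "\<And>i. Suc i < length s' \<Longrightarrow> is_merge (s' ! i) (s' ! Suc i)"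
    unfolding scenarios_def by auto
  define s where "s = butlast s'"
  have eq: "s' = s @ [q]" unfolding s_def using p(1,3) append_butlast_last_id[of s'] by simp
  have "s \<noteq> []" using p q unfolding eq by (cases s) auto
  then have hd: "hd s = pi0 z" and last: "s' ! (length s - 1) = last s" "s' ! length s = q"
    using p(2) unfolding eq by (auto simp: nth_append last_conv_nth)
  have "is_merge (s ! i) (s ! Suc i)" if "Suc i < length s" for i
    using chain[of i] that unfolding eq by (simp add: nth_append)
  then have sr: "s \<in> scenarios z (last s)" unfolding scenarios_def using \<open>s \<noteq> []\<close> hd by simp
  have "is_merge (last s) q" using chain[of "length s - 1"] last \<open>s \<noteq> []\<close> unfolding eq by simp
  moreover have "last s \<in> partitions_of z" using scenarios_partitions[OF z sr] \<open>s \<noteq> []\<close> by auto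
  ultimately have "last s \<in> merge_preds z q" unfolding merge_preds_def by simp
  then show "s' \<in> (\<lambda>s. s @ [q]) ` (\<Union>r\<in>merge_preds z q. scenarios z r)" using eq sr by blast
next
  fix s' assume "s' \<in> (\<lambda>s. s @ [q]) ` (\<Union>r\<in>merge_preds z q. scenarios z r)"
  then obtain r s where r: "is_merge r q" and s: "s \<in> scenarios z r" and eq: "s' = s @ [q]"
    unfolding merge_preds_def by blast
  have "is_merge ((s @ [q]) ! i) ((s @ [q]) ! Suc i)" if i: "Suc i < length (s @ [q])" for i
  proof (cases "Suc i < length s")
    case True
    then show ?thesis using s unfolding scenarios_def by (simp add: nth_append)
  next
    case False
    then have "i = length s - 1" "s \<noteq> []" using i s unfolding scenarios_def by auto
    then show ?thesis using r s unfolding scenarios_def by (simp add: nth_append last_conv_nth)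
  qed
  then show "s' \<in> scenarios z q" using s unfolding eq scenarios_def by auto
qed

lemma F_fun_rec:
  assumes z: "finite z" and q: "q \<noteq> pi0 z"
  shows "F_fun z q = (\<Sum>r\<in>merge_preds z q. F_fun z r) / cover_length q"
proof -
  have inj: "inj_on (\<lambda>s. s @ [q]) (\<Union>r\<in>merge_preds z q. scenarios z r)" by (auto simp: inj_on_def)
  have disj: "\<forall>r\<in>merge_preds z q. \<forall>r'\<in>merge_preds z q. r \<noteq> r' \<longrightarrow> scenarios z r \<inter> scenarios z r' = {}"
    unfolding scenarios_def by auto
  have "F_fun z q = (\<Sum>s\<in>(\<Union>r\<in>merge_preds z q. scenarios z r). 1 / energy (s @ [q]))"
    unfolding F_fun_def scenarios_snoc[OF z q] by (simp add: sum.reindex[OF inj])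
  also have "\<dots> = (\<Sum>r\<in>merge_preds z q. \<Sum>s\<in>scenarios z r. 1 / energy (s @ [q]))"
    using finite_merge_preds[OF z] finite_scenarios[OF z] disj by (intro sum.UNION_disjoint) auto
  also have "\<dots> = (\<Sum>r\<in>merge_preds z q. \<Sum>s\<in>scenarios z r. 1 / energy s / cover_length q)"
    using energy_snoc unfolding scenarios_def by (intro sum.cong) auto
  also have "\<dots> = (\<Sum>r\<in>merge_preds z q. F_fun z r) / cover_length q"
    unfolding F_fun_def by (simp add: sum_divide_distrib)
  finally show ?thesis .
qed

lemma F_fun_nonneg:
  assumes "finite z"
  shows "0 \<le> F_fun z P"
proof -
  have "0 \<le> energy s" if "s \<in> scenarios z P" for s
    unfolding energy_def using scenarios_nth(1)[OF assms that] cover_length_nonneg[OF assms]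
    by (intro prod_nonneg) auto
  then show ?thesis unfolding F_fun_def by (intro sum_nonneg) simp
qed

section \<open>Comparison of F with interval weights\<close>

definition partition_weight :: "real set set \<Rightarrow> real" where
  "partition_weight P = (\<Prod>b\<in>P. interval_weight b)"

lemma partition_weight_pos [simp]: "0 < partition_weight P"
  unfolding partition_weight_def by (intro prod_pos) simp

lemma partition_weight_nonneg [simp]: "0 \<le> partition_weight P"
  using less_imp_le[OF partition_weight_pos] .

lemma partition_weight_pi0 [simp]: "partition_weight (pi0 z) = 1"
  unfolding partition_weight_def pi0_def by (intro prod.neutral) (auto simp: interval_weight_trivial)

lemma partition_weight_remove:
  "finite P \<Longrightarrow> b \<in> P \<Longrightarrow> partition_weight P = interval_weight b * partition_weight (P - {b})"
  unfolding partition_weight_def by (rule prod.remove)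

lemma subblock_notin_other_blocks:
  assumes "partition_on z P" "b \<in> P" "d \<subseteq> b" "d \<noteq> {}"
  shows "d \<notin> P - {b}"
proof
  assume "d \<in> P - {b}"
  then have "d \<inter> b = {}" using partition_blocks_disjoint[OF assms(1) _ assms(2)] by auto
  then show False using assms(3,4) by auto
qed

definition split_off :: "real set set \<Rightarrow> real set \<Rightarrow> real set \<Rightarrow> real set set" where
  "split_off q c X = insert X (insert (c - X) (q - {c}))"

lemma split_off_new_blocks:
  assumes q: "partition_on z q" and c: "c \<in> q" and X: "X \<subseteq> c" "X \<noteq> {}" "X \<noteq> c"
  shows "X \<notin> q - {c}" "c - X \<notin> q - {c}" "X \<noteq> c - X"
proof -
  have "c - X \<noteq> {}" using X by auto
  then show "X \<notin> q - {c}" "c - X \<notin> q - {c}" "X \<noteq> c - X"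
    using subblock_notin_other_blocks[OF q c X(1,2)] subblock_notin_other_blocks[OF q c, of "c - X"] X(2)
    by auto
qed

lemma partition_split_off:
  assumes q: "partition_on z q" and c: "c \<in> q" and X: "X \<subseteq> c" "X \<noteq> {}" "X \<noteq> c"
  shows "partition_on z (split_off q c X)"
proof -
  have cut: "partition_on (\<Union>{c}) {X, c - X}"
  proof (rule partition_onI)
    show "\<Union>{X, c - X} = \<Union>{c}" using X(1) by auto
    show "{} \<notin> {X, c - X}" using X by auto
  qed (auto simp: disjnt_def)
  have "split_off q c X = {X, c - X} \<union> (q - {c})" unfolding split_off_def by auto
  then show ?thesis using partition_on_replace_blocks[OF q _ cut] c by simp
qed

lemma split_off_is_merge:
  assumes q: "partition_on z q" and c: "c \<in> q" and X: "X \<subseteq> c" "X \<noteq> {}" "X \<noteq> c"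
  shows "is_merge (split_off q c X) q"
proof -
  note new = split_off_new_blocks[OF assms]
  have "X \<union> (c - X) = c" "split_off q c X - {X, c - X} = q - {c}"
    using new X unfolding split_off_def by auto
  then have "merge_blocks (split_off q c X) X (c - X) = q"
    using c unfolding merge_blocks_def by auto
  moreover have "X \<in> split_off q c X" "c - X \<in> split_off q c X" unfolding split_off_def by auto
  ultimately show ?thesis unfolding is_merge_def using new(3) by metis
qed

lemma partition_weight_split_off:
  assumes z: "finite z" and q: "partition_on z q" and c: "c \<in> q" and X: "X \<subseteq> c" "X \<noteq> {}" "X \<noteq> c"
  shows "partition_weight (split_off q c X) = interval_weight X * interval_weight (c - X) * partition_weight (q - {c})"
  unfolding partition_weight_def split_off_def
  using split_off_new_blocks[OF q c X] finite_elements[OF z q] by simp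

lemma merge_preds_split_off:
  assumes z: "finite z" and r: "r \<in> merge_preds z q"
  obtains c X where "c \<in> q" "X \<subseteq> c" "X \<noteq> {}" "X \<noteq> c" "r = split_off q c X"
proof -
  have rp: "partition_on z r" "is_merge r q" using r unfolding merge_preds_def partitions_of_def by auto
  then obtain b1 b2 where b: "b1 \<in> r" "b2 \<in> r" "b1 \<noteq> b2" "q = merge_blocks r b1 b2"
    unfolding is_merge_def by blast
  have dj: "b1 \<inter> b2 = {}" using partition_blocks_disjoint[OF rp(1) b(1-3)] .
  have ne: "b1 \<noteq> {}" "b2 \<noteq> {}" using partition_onD3[OF rp(1)] b(1,2) by auto
  have "q - {b1 \<union> b2} = r - {b1, b2}"
    using b(4) merge_blocks_union_notin[OF rp(1) b(1-3)] unfolding merge_blocks_def by auto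
  moreover have "(b1 \<union> b2) - b1 = b2" using dj by auto
  ultimately have "split_off q (b1 \<union> b2) b1 = insert b1 (insert b2 (r - {b1, b2}))"
    unfolding split_off_def by simp
  also have "\<dots> = r" using b(1,2) by auto
  finally have "r = split_off q (b1 \<union> b2) b1" ..
  moreover have "b1 \<union> b2 \<in> q" using b(4) unfolding merge_blocks_def by simp
  moreover have "b1 \<subseteq> b1 \<union> b2" "b1 \<noteq> b1 \<union> b2" using ne(2) dj by auto
  ultimately show ?thesis using that ne(1) by blast
qed

definition F_growth_const :: "nat \<Rightarrow> real" where
  "F_growth_const N = 2 ^ N * pair_split_const N"

lemma F_growth_const_ge_1: "1 \<le> F_growth_const N"
  unfolding F_growth_const_def using pair_split_const_ge_1[of N] mult_mono[of 1 "2 ^ N :: real" 1] by simp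

lemma sum_merge_preds_weight_le:
  assumes z: "finite z" and q: "partition_on z q"
  shows "(\<Sum>r\<in>merge_preds z q. partition_weight r) \<le> F_growth_const (card z) * cover_length q * partition_weight q"
proof -
  define proper where "proper c = {X. X \<subseteq> c \<and> X \<noteq> {} \<and> X \<noteq> c}" for c :: "real set"
  define I where "I = Sigma q proper"
  note blocks = partition_blocks[OF z q]
  have fI: "finite I" unfolding I_def proper_def using blocks by (intro finite_SigmaI) auto
  have "merge_preds z q \<subseteq> (\<lambda>(c, X). split_off q c X) ` I"
    by (auto elim!: merge_preds_split_off[OF z] simp: I_def proper_def)
  then have "(\<Sum>r\<in>merge_preds z q. partition_weight r) \<le> (\<Sum>r\<in>(\<lambda>(c, X). split_off q c X) ` I. partition_weight r)"
    using fI by (intro sum_mono2) auto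
  also have "\<dots> \<le> (\<Sum>(c, X)\<in>I. partition_weight (split_off q c X))"
    using sum_image_le[OF fI, of partition_weight "\<lambda>(c, X). split_off q c X"] by (simp add: case_prod_beta)
  also have "\<dots> = (\<Sum>c\<in>q. \<Sum>X\<in>proper c. partition_weight (split_off q c X))"
    unfolding I_def using blocks by (subst sum.Sigma) (auto simp: proper_def)
  also have "\<dots> \<le> (\<Sum>c\<in>q. \<Sum>X\<in>proper c. pair_split_const (card z) * diam c * partition_weight q)"
  proof (intro sum_mono)
    fix c X assume c: "c \<in> q" and "X \<in> proper c"
    then have X: "X \<subseteq> c" "X \<noteq> {}" "X \<noteq> c" unfolding proper_def by auto
    have fc: "finite c" "c \<noteq> {}" "card c \<le> card z" using blocks(2)[OF c] card_mono[OF z, of c] by auto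
    have "interval_weight X * interval_weight (c - X) \<le> pair_split_const (card c) * diam c * interval_weight c"
      using interval_weight_pair_le[OF fc(1), of X "c - X"] X by auto
    also have "\<dots> \<le> pair_split_const (card z) * diam c * interval_weight c"
      using pair_split_const_mono[OF fc(3)] diam_nonneg[OF fc(1,2)] by (intro mult_right_mono) auto
    finally show "partition_weight (split_off q c X) \<le> pair_split_const (card z) * diam c * partition_weight q"
      unfolding partition_weight_split_off[OF z q c X] partition_weight_remove[OF blocks(1) c]
      by (simp add: mult_right_mono mult.assoc)
  qed
  also have "\<dots> \<le> (\<Sum>c\<in>q. 2 ^ card z * (pair_split_const (card z) * diam c * partition_weight q))"
  proof (intro sum_mono mult_right_mono)
    fix c assume c: "c \<in> q"
    have fc: "finite c" "card c \<le> card z" using blocks(2)[OF c] card_mono[OF z, of c] by auto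
    have "card (proper c) \<le> card (Pow c)" unfolding proper_def using fc by (intro card_mono) auto
    also have "\<dots> \<le> 2 ^ card z" using fc by (simp add: card_Pow power_increasing)
    finally show "(\<Sum>X\<in>proper c. pair_split_const (card z) * diam c * partition_weight q)
        \<le> 2 ^ card z * (pair_split_const (card z) * diam c * partition_weight q)"
      using pair_split_const_ge_1[of "card z"] diam_nonneg[of c] blocks(2)[OF c]
      by (simp add: mult_right_mono flip: of_nat_le_iff)
  qed
  also have "\<dots> = F_growth_const (card z) * cover_length q * partition_weight q"
    unfolding F_growth_const_def cover_length_eq_sum_diam[OF z q]
    by (simp add: sum_distrib_left sum_distrib_right mult_ac)
  finally show ?thesis .
qed

lemma F_fun_le_weight:
  assumes z: "finite z" and q: "partition_on z q"
  shows "F_fun z q \<le> F_growth_const (card z) ^ (card z - card q) * partition_weight q"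
  using q
proof (induction "card z - card q" arbitrary: q rule: less_induct)
  case less
  note q = less.prems
  define K where "K = F_growth_const (card z)"
  have K: "1 \<le> K" unfolding K_def by (rule F_growth_const_ge_1)
  show ?case
  proof (cases "q = pi0 z")
    case False
    obtain m where m: "card z - card q = Suc m"
      using card_lt_if_not_pi0[OF z q False] by (cases "card z - card q") auto
    have C: "0 < cover_length q" using cover_length_ge_min_dist[OF z q False] by linarith
    have IH: "F_fun z r \<le> K ^ m * partition_weight r" if r: "r \<in> merge_preds z q" for r
    proof -
      have "partition_on z r" "card z - card r = m" using merge_preds_card[OF z r] m by auto
      then show ?thesis using less.hyps[of r] m unfolding K_def by simp
    qed
    have "F_fun z q * cover_length q = (\<Sum>r\<in>merge_preds z q. F_fun z r)"
      using F_fun_rec[OF z False] C by simp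
    also have "\<dots> \<le> (\<Sum>r\<in>merge_preds z q. K ^ m * partition_weight r)"
      using IH by (rule sum_mono)
    also have "\<dots> = K ^ m * (\<Sum>r\<in>merge_preds z q. partition_weight r)"
      by (simp add: sum_distrib_left)
    also have "\<dots> \<le> K ^ m * (K * cover_length q * partition_weight q)"
      using sum_merge_preds_weight_le[OF z q] K unfolding K_def by (intro mult_left_mono) auto
    also have "\<dots> = (K ^ Suc m * partition_weight q) * cover_length q" by (simp add: mult_ac)
    finally show ?thesis using C m unfolding K_def by simp
  qed (use z in simp)
qed

lemma widest_block:
  assumes z: "finite z" and q: "partition_on z q" "q \<noteq> pi0 z"
  obtains c where "c \<in> q" "\<not> card c \<le> 1" "cover_length q \<le> real (card z) * diam c"
proof -
  note blocks = partition_blocks[OF z q(1)]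
  have C: "0 < cover_length q" using cover_length_ge_min_dist[OF z q] by linarith
  have "q \<noteq> {}"
  proof
    assume "q = {}"
    then have "cover_length q = 0" by (simp add: cover_length_def)
    then show False using C by simp
  qed
  then have "Max (diam ` q) \<in> diam ` q" using blocks(1) by simp
  then obtain c where c: "Max (diam ` q) = diam c" "c \<in> q" by (rule imageE)
  have fc: "finite c" "c \<noteq> {}" using blocks(2)[OF c(2)] by auto
  have "cover_length q \<le> (\<Sum>c'\<in>q. diam c)"
    unfolding cover_length_eq_sum_diam[OF z q(1)] using Max_ge[of "diam ` q"] blocks(1)
    unfolding c(1) by (intro sum_mono) simp
  also have "\<dots> \<le> real (card z) * diam c"
    using card_partition_le[OF z q(1)] diam_nonneg[OF fc] by (simp add: mult_right_mono)
  finally have CN: "cover_length q \<le> real (card z) * diam c" .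
  have "\<not> card c \<le> 1"
  proof
    assume "card c \<le> 1"
    then have "card c = 1" using fc by (simp add: le_Suc_eq card_gt_0_iff)
    then obtain a where "c = {a}" by (rule card_1_singletonE)
    then show False using C CN by simp
  qed
  then show ?thesis using that c(2) CN by blast
qed

lemma merge_pred_of_optimal_cut:
  assumes z: "finite z" and q: "partition_on z q" and c: "c \<in> q" "\<not> card c \<le> 1"
  obtains r where "r \<in> merge_preds z q" "partition_weight r = diam c * partition_weight q"
proof -
  note blocks = partition_blocks[OF z q]
  have fc: "finite c" using blocks(2)[OF c(1)] by simp
  obtain x where x: "x \<in> c" "x < Max c"
    and opt: "interval_weight c = interval_weight (below c x) * interval_weight (above c x) / diam c"
    using interval_weight_cut_exists[OF fc c(2)] by blast
  have Mc: "Max c \<in> c" using x(1) fc by (metis Max_in empty_iff)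
  then have "0 < diam c" using diam_pos[OF fc x(1) Mc] x(2) by simp
  define X where "X = below c x"
  have "Max c \<in> c - X" using Mc x(2) unfolding X_def by auto
  then have X: "X \<subseteq> c" "X \<noteq> {}" "X \<noteq> c" "c - X = above c x" using x(1) unfolding X_def by auto
  have "split_off q c X \<in> merge_preds z q"
    using partition_split_off[OF q c(1) X(1-3)] split_off_is_merge[OF q c(1) X(1-3)]
    unfolding merge_preds_def partitions_of_def by simp
  moreover have "partition_weight (split_off q c X)
      = interval_weight X * interval_weight (c - X) * partition_weight (q - {c})"
    by (rule partition_weight_split_off[OF z q c(1) X(1-3)])
  moreover have "\<dots> = diam c * partition_weight q"
    unfolding partition_weight_remove[OF blocks(1) c(1)] X(4) using \<open>0 < diam c\<close>
    by (simp add: opt X_def)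
  ultimately show ?thesis using that by metis
qed

lemma weight_le_F_fun:
  assumes z: "finite z" and q: "partition_on z q"
  shows "partition_weight q / real (card z) ^ (card z - card q) \<le> F_fun z q"
  using q
proof (induction "card z - card q" arbitrary: q rule: less_induct)
  case less
  note q = less.prems
  define N where "N = real (card z)"
  show ?case
  proof (cases "q = pi0 z")
    case False
    obtain m where m: "card z - card q = Suc m"
      using card_lt_if_not_pi0[OF z q False] by (cases "card z - card q") auto
    have C: "0 < cover_length q" using cover_length_ge_min_dist[OF z q False] by linarith
    obtain c where c: "c \<in> q" "\<not> card c \<le> 1" and CN: "cover_length q \<le> N * diam c"
      using widest_block[OF z q False] unfolding N_def by blast
    obtain r where r: "r \<in> merge_preds z q" and wr: "partition_weight r = diam c * partition_weight q"
      using merge_pred_of_optimal_cut[OF z q c] by blast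
    have "0 < N * diam c" using C CN by linarith
    moreover have "0 \<le> N" unfolding N_def by simp
    ultimately have "0 < N" "0 < diam c" by (auto simp: zero_less_mult_iff)
    have "partition_weight q / N ^ Suc m = diam c * partition_weight q / ((N * diam c) * N ^ m)"
      using \<open>0 < diam c\<close> by simp
    also have "\<dots> \<le> partition_weight r / (cover_length q * N ^ m)"
      unfolding wr using CN C \<open>0 < N\<close> \<open>0 < diam c\<close>
      by (intro divide_left_mono mult_right_mono mult_pos_pos) auto
    also have "\<dots> \<le> F_fun z r / cover_length q"
    proof -
      have "partition_on z r" "card z - card r = m" using merge_preds_card[OF z r] m by auto
      then have "partition_weight r / N ^ m \<le> F_fun z r" using less.hyps[of r] m unfolding N_def by simp
      then have "partition_weight r / N ^ m / cover_length q \<le> F_fun z r / cover_length q"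
        using C by (intro divide_right_mono) auto
      then show ?thesis by (simp add: divide_divide_eq_left mult.commute)
    qed
    also have "\<dots> \<le> F_fun z q"
      unfolding F_fun_rec[OF z False] using r C F_fun_nonneg[OF z] finite_merge_preds[OF z]
      by (intro divide_right_mono member_le_sum) auto
    finally show ?thesis using m unfolding N_def by simp
  qed (use z in simp)
qed

lemma split_block_weight_cover:
  assumes z: "finite z" and r: "partition_on z r" and b: "b \<in> r" and xy: "(x, y) \<in> adjacent_pairs b"
  shows "partition_weight r \<le> partition_weight (split_block r b x y) / (y - x)"
    "cover_length r = cover_length (split_block r b x y) + (y - x)"
proof -
  note blocks = partition_blocks[OF z r]
  have fb: "finite b" using blocks(2)[OF b] by simp
  have x: "x \<in> below b x" and y: "y \<in> above b x" and "x < y"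
    using xy unfolding adjacent_pairs_def by auto
  have new: "below b x \<notin> r - {b}" "above b x \<notin> r - {b}" "below b x \<noteq> above b x"
    using subblock_notin_other_blocks[OF r b, of "below b x"] subblock_notin_other_blocks[OF r b, of "above b x"]
      x y partition_adjacent_cut(2)[OF xy] by auto
  have "interval_weight b \<le> interval_weight (below b x) * interval_weight (above b x) / (y - x)"
    using adjacent_pairs_cut(1)[OF fb xy] x y \<open>x < y\<close> by (intro interval_weight_cut_le[OF fb]) auto
  then have "partition_weight r \<le> interval_weight (below b x) * interval_weight (above b x) / (y - x)
      * partition_weight (r - {b})"
    unfolding partition_weight_remove[OF blocks(1) b] by (intro mult_right_mono) auto
  also have "\<dots> = partition_weight (split_block r b x y) / (y - x)"
    unfolding split_block_adjacent[OF xy] partition_weight_def using new blocks(1) by simp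
  finally show "partition_weight r \<le> partition_weight (split_block r b x y) / (y - x)" .
  have "diam b = diam (below b x) + (y - x) + diam (above b x)"
    using diam_cut[OF fb, of x] x y adjacent_pairs_cut(2,3)[OF fb xy] by auto
  moreover have "cover_length (split_block r b x y) = (\<Sum>d\<in>split_block r b x y. diam d)"
    by (rule cover_length_eq_sum_diam[OF z partition_split_block[OF r b xy]])
  moreover have "(\<Sum>d\<in>split_block r b x y. diam d)
      = diam (below b x) + diam (above b x) + (\<Sum>d\<in>r - {b}. diam d)"
    unfolding split_block_adjacent[OF xy] using new blocks(1) by simp
  ultimately show "cover_length r = cover_length (split_block r b x y) + (y - x)"
    unfolding cover_length_eq_sum_diam[OF z r] sum.remove[OF blocks(1) b] by simp
qed

definition F_split_const :: "nat \<Rightarrow> real" where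
  "F_split_const N = 2 * F_growth_const N ^ N * real N ^ N"

(* Splitting at a gap g shortens the cover length by g but divides the partition weight by at most g
   (split_block_weight_cover), and min_dist z bounds both g and the cover length of q from below. *)
lemma F_fun_split_le:
  assumes z: "finite z" and r: "partition_on z r" and split: "split_events r q \<noteq> {}" and q: "q \<noteq> pi0 z"
  shows "min_dist z * cover_length r * F_fun z r \<le> F_split_const (card z) * cover_length q * F_fun z q"
proof -
  obtain b x y where b: "b \<in> r" and xy: "(x, y) \<in> adjacent_pairs b" and qeq: "q = split_block r b x y"
    using split unfolding split_events_eq by auto
  have qp: "partition_on z q" unfolding qeq by (rule partition_split_block[OF r b xy])
  define g where "g = y - x"
  define \<alpha> where "\<alpha> = min_dist z"
  define K where "K = F_growth_const (card z)"
  define N where "N = real (card z)"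
  have K: "1 \<le> K" unfolding K_def by (rule F_growth_const_ge_1)
  have xy': "x \<in> z" "y \<in> z" "x \<noteq> y" "0 < g"
    using xy b partition_blocks(2)[OF z r] unfolding adjacent_pairs_def g_def by auto
  have \<alpha>: "0 < \<alpha>" "\<alpha> \<le> g" "\<alpha> \<le> cover_length q"
    using min_dist_le[OF z xy'(1-3)] cover_length_ge_min_dist[OF z qp q] xy'(4)
    unfolding \<alpha>_def g_def by auto
  have weight: "partition_weight r \<le> partition_weight q / g" and cover: "cover_length r = cover_length q + g"
    using split_block_weight_cover[OF z r b xy] unfolding qeq g_def by auto
  obtain m where m: "card z - card q = m" "card z - card r = Suc m"
    using card_split_block[OF z r b xy] card_lt_if_not_pi0[OF z qp q] unfolding qeq by auto
  have N: "1 \<le> N" "m \<le> card z" "Suc m \<le> card z" using m card_lt_if_not_pi0[OF z qp q] unfolding N_def by auto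
  have "\<alpha> * cover_length r * F_fun z r \<le> \<alpha> * cover_length r * (K ^ Suc m * partition_weight r)"
    using F_fun_le_weight[OF z r] m \<alpha> cover_length_nonneg[OF z r] unfolding K_def
    by (intro mult_left_mono) auto
  also have "\<dots> \<le> \<alpha> * cover_length r * (K ^ Suc m * (partition_weight q / g))"
    using weight \<alpha> cover_length_nonneg[OF z r] K by (intro mult_left_mono) auto
  also have "\<dots> = (\<alpha> * cover_length q / g + \<alpha>) * K ^ Suc m * partition_weight q"
    unfolding cover using xy'(4) by (simp add: field_simps)
  also have "\<dots> \<le> (2 * cover_length q) * K ^ Suc m * partition_weight q"
  proof -
    have "\<alpha> * cover_length q / g \<le> cover_length q"
      using \<alpha> xy'(4) by (simp add: divide_le_eq mult_right_mono mult.commute)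
    then show ?thesis using \<alpha> K by (intro mult_right_mono) auto
  qed
  also have "\<dots> \<le> (2 * cover_length q) * K ^ Suc m * (N ^ m * F_fun z q)"
    using weight_le_F_fun[OF z qp] m \<alpha> K N unfolding N_def by (intro mult_left_mono) (auto simp: divide_le_eq mult.commute)
  also have "\<dots> = (2 * K ^ Suc m * N ^ m) * (cover_length q * F_fun z q)" by (simp add: mult_ac)
  also have "\<dots> \<le> F_split_const (card z) * (cover_length q * F_fun z q)"
  proof (rule mult_right_mono)
    have "K ^ Suc m * N ^ m \<le> K ^ card z * N ^ card z"
      using K N by (intro mult_mono power_increasing) auto
    then show "2 * K ^ Suc m * N ^ m \<le> F_split_const (card z)"
      unfolding F_split_const_def K_def N_def by simp
    show "0 \<le> cover_length q * F_fun z q" using \<alpha> F_fun_nonneg[OF z] by simp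
  qed
  finally show ?thesis unfolding \<alpha>_def by (simp add: mult.assoc)
qed

section \<open>First-passage sums of a jump chain\<close>

lemma path_prob_snoc: "path_prob p (xs @ [u, v]) = path_prob p (xs @ [u]) * p u v"
  by (induction p xs rule: path_prob.induct) auto

lemma path_prob_nonneg: "(\<And>x y. 0 \<le> p x y) \<Longrightarrow> 0 \<le> path_prob p xs"
  by (induction p xs rule: path_prob.induct) auto

lemma path_prob_ge_prod_list:
  assumes "\<And>x. x \<in> set xs \<Longrightarrow> 0 \<le> g x"
    and "\<And>i. Suc i < length xs \<Longrightarrow> g (xs ! i) \<le> p (xs ! i) (xs ! Suc i)"
  shows "prod_list (map g (butlast xs)) \<le> path_prob p xs"
  using assms
proof (induction p xs rule: path_prob.induct)
  case (1 p x y ys)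
  have "g x \<le> p x y" using "1.prems"(2)[of 0] by simp
  moreover have "prod_list (map g (butlast (y # ys))) \<le> path_prob p (y # ys)"
    using "1.IH" "1.prems"(1) "1.prems"(2)[of "Suc i" for i] by fastforce
  moreover have "0 \<le> g v" if "v \<in> set (butlast (y # ys))" for v
    using "1.prems"(1)[of v] in_set_butlastD[OF that] by simp
  then have "0 \<le> prod_list (map g (butlast (y # ys)))" by (intro prod_list_nonneg) auto
  ultimately have "g x * prod_list (map g (butlast (y # ys))) \<le> p x y * path_prob p (y # ys)"
    using "1.prems"(1)[of x] by (intro mult_mono) auto
  moreover have "butlast (x # y # ys) = x # butlast (y # ys)" by simp
  ultimately show ?case by (simp only: list.map prod_list.Cons path_prob.simps)
qed auto

definition taboo_path_sum :: "'a set \<Rightarrow> ('a \<Rightarrow> 'a \<Rightarrow> real) \<Rightarrow> 'a \<Rightarrow> nat \<Rightarrow> 'a \<Rightarrow> real" where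
  "taboo_path_sum S p a m q = (\<Sum>xs\<in>{xs. length xs = m \<and> set xs \<subseteq> S - {a}}. path_prob p (a # xs @ [q]))"

lemma lists_length_Suc_eq:
  "{xs. length xs = Suc m \<and> set xs \<subseteq> A} = (\<lambda>(ys, r). ys @ [r]) ` ({ys. length ys = m \<and> set ys \<subseteq> A} \<times> A)"
proof (intro equalityI subsetI)
  fix xs assume xs: "xs \<in> {xs. length xs = Suc m \<and> set xs \<subseteq> A}"
  then have "xs = butlast xs @ [last xs]" "length (butlast xs) = m" "set (butlast xs) \<subseteq> A" "last xs \<in> A"
    by (auto dest: in_set_butlastD) (metis Zero_not_Suc append_butlast_last_id length_0_conv last_in_set subsetD)+
  then show "xs \<in> (\<lambda>(ys, r). ys @ [r]) ` ({ys. length ys = m \<and> set ys \<subseteq> A} \<times> A)"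
    by (intro image_eqI[where x="(butlast xs, last xs)"]) auto
qed auto

lemma taboo_path_sum_0: "taboo_path_sum S p a 0 q = p a q"
proof -
  have "{xs. length xs = 0 \<and> set xs \<subseteq> S - {a}} = {[]}" by auto
  then show ?thesis unfolding taboo_path_sum_def by simp
qed

lemma taboo_path_sum_Suc:
  assumes "finite S"
  shows "taboo_path_sum S p a (Suc m) q = (\<Sum>r\<in>S - {a}. taboo_path_sum S p a m r * p r q)"
proof -
  define L where "L = {ys. length ys = m \<and> set ys \<subseteq> S - {a}}"
  have fL: "finite L" unfolding L_def using finite_lists_length_eq[of "S - {a}" m] assms
    by (simp add: conj_commute)
  have inj: "inj_on (\<lambda>(ys, r). ys @ [r]) (L \<times> (S - {a}))" by (auto simp: inj_on_def)
  have "taboo_path_sum S p a (Suc m) q = (\<Sum>(ys, r)\<in>L \<times> (S - {a}). path_prob p ((a # ys) @ [r, q]))"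
    unfolding taboo_path_sum_def lists_length_Suc_eq L_def[symmetric] sum.reindex[OF inj]
    by (simp add: case_prod_beta)
  also have "\<dots> = (\<Sum>r\<in>S - {a}. \<Sum>ys\<in>L. path_prob p (a # ys @ [r]) * p r q)"
    unfolding path_prob_snoc sum.cartesian_product[symmetric] by (subst sum.swap) simp
  also have "\<dots> = (\<Sum>r\<in>S - {a}. taboo_path_sum S p a m r * p r q)"
    unfolding taboo_path_sum_def L_def by (simp add: sum_distrib_right)
  finally show ?thesis .
qed

lemma taboo_path_sum_le_supersolution:
  assumes S: "finite S" and p: "\<And>x y. 0 \<le> p x y"
    and H: "\<And>q. q \<in> S - {a} \<Longrightarrow> 0 \<le> H q"
    and super: "\<And>q. q \<in> S - {a} \<Longrightarrow> p a q + (\<Sum>r\<in>S - {a}. H r * p r q) \<le> H q"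
  shows "q \<in> S - {a} \<Longrightarrow> (\<Sum>m<M. taboo_path_sum S p a m q) \<le> H q"
proof (induction M arbitrary: q)
  case (Suc M)
  have "(\<Sum>m<Suc M. taboo_path_sum S p a m q) = p a q + (\<Sum>m<M. taboo_path_sum S p a (Suc m) q)"
    unfolding sum.lessThan_Suc_shift taboo_path_sum_0 ..
  also have "\<dots> = p a q + (\<Sum>r\<in>S - {a}. (\<Sum>m<M. taboo_path_sum S p a m r) * p r q)"
    unfolding taboo_path_sum_Suc[OF S] by (subst sum.swap) (simp add: sum_distrib_right)
  also have "\<dots> \<le> p a q + (\<Sum>r\<in>S - {a}. H r * p r q)"
    using Suc.IH p by (intro add_left_mono sum_mono mult_right_mono) auto
  also have "\<dots> \<le> H q" using super Suc.prems by simp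
  finally show ?case .
qed (use H in simp)

definition hit_path_sum :: "'a set \<Rightarrow> ('a \<Rightarrow> 'a \<Rightarrow> real) \<Rightarrow> 'a \<Rightarrow> 'a \<Rightarrow> nat \<Rightarrow> real" where
  "hit_path_sum S p a b m = (\<Sum>xs\<in>{xs. length xs = m \<and> set xs \<subseteq> S - {a, b}}. path_prob p (a # xs @ [b]))"

lemma hit_before_return_eq_suminf: "hit_before_return S p a b = (\<Sum>m. hit_path_sum S p a b m)"
  unfolding hit_before_return_def hit_path_sum_def ..

lemma hit_path_sum_nonneg: "(\<And>x y. 0 \<le> p x y) \<Longrightarrow> 0 \<le> hit_path_sum S p a b m"
  unfolding hit_path_sum_def by (intro sum_nonneg path_prob_nonneg)

lemma hit_before_return_le_supersolution:
  assumes S: "finite S" and p_nonneg: "\<And>x y. 0 \<le> p x y"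
    and H: "\<And>q. q \<in> S - {a} \<Longrightarrow> 0 \<le> H q"
    and super: "\<And>q. q \<in> S - {a} \<Longrightarrow> p a q + (\<Sum>r\<in>S - {a}. H r * p r q) \<le> H q"
    and b: "b \<in> S - {a}"
  shows "summable (hit_path_sum S p a b)" "hit_before_return S p a b \<le> H b"
proof -
  have "hit_path_sum S p a b m \<le> taboo_path_sum S p a m b" for m
    unfolding hit_path_sum_def taboo_path_sum_def
    using S finite_lists_length_eq[of "S - {a}" m] path_prob_nonneg[of p, OF p_nonneg]
    by (intro sum_mono2) (auto simp: conj_commute)
  then have partial: "(\<Sum>m<M. hit_path_sum S p a b m) \<le> H b" for M
    using taboo_path_sum_le_supersolution[OF S p_nonneg H super b, of M] sum_mono[of "{..<M}"]
    by (meson order_trans)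
  show sum: "summable (hit_path_sum S p a b)"
    using partial hit_path_sum_nonneg[of p, OF p_nonneg] by (intro summableI_nonneg_bounded) auto
  show "hit_before_return S p a b \<le> H b"
    unfolding hit_before_return_eq_suminf using suminf_le_const[OF sum partial] .
qed

lemma hit_path_sum_le_hit_before_return:
  assumes "summable (hit_path_sum S p a b)" "\<And>x y. 0 \<le> p x y"
  shows "hit_path_sum S p a b m \<le> hit_before_return S p a b"
proof -
  have "(\<Sum>i\<in>{m}. hit_path_sum S p a b i) \<le> (\<Sum>i. hit_path_sum S p a b i)"
    using hit_path_sum_nonneg[of p, OF assms(2)] by (intro sum_le_suminf[OF assms(1)]) auto
  then show ?thesis unfolding hit_before_return_eq_suminf by simp
qed

section \<open>Bounds on the hitting probability\<close>

lemma ratio_div_le_inverse_add: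
  fixes a x \<gamma> :: real
  assumes "0 < a" "a \<le> x" "0 < \<gamma>"
  shows "a / (a + \<gamma>) / x \<le> 1 / (\<gamma> + x)"
proof -
  have x: "0 < x" using assms by linarith
  define D where "D = (a + \<gamma>) * x * (\<gamma> + x)"
  have D: "0 < D" unfolding D_def using assms x by simp
  have nz: "\<gamma> + x \<noteq> 0" using assms x by simp
  have "a / (a + \<gamma>) / x = a * (\<gamma> + x) / D"
    unfolding D_def divide_divide_eq_left mult_divide_mult_cancel_right[OF nz] ..
  also have "\<dots> \<le> (a + \<gamma>) * x / D"
    using assms D by (intro divide_right_mono) (auto simp: algebra_simps mult_left_mono)
  also have "\<dots> = 1 / (\<gamma> + x)" unfolding D_def using assms x by simp
  finally show ?thesis .
qed

lemma prod_list_map_divide: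
  fixes c :: real
  shows "prod_list (map (\<lambda>y. c / f y) ys) = c ^ length ys / prod_list (map f ys)"
  by (induction ys) (simp_all add: times_divide_times_eq)

lemma gamma0_eq_choose: "gamma0 (N - 1) = real (N choose 2)"
proof (cases N)
  case (Suc n)
  have "2 * (Suc n choose 2) = Suc n * n" unfolding choose_two by simp
  then have "real (2 * (Suc n choose 2)) = real (Suc n * n)" by (simp only:)
  then show ?thesis unfolding gamma0_def Suc by (simp add: field_simps)
qed (simp add: gamma0_def)

definition main_term :: "real set \<Rightarrow> real \<Rightarrow> real set set \<Rightarrow> real" where
  "main_term z \<rho> Q = cover_length Q * F_fun z Q / (\<rho> ^ (card z - card Q - 1) * gamma0 (card z - 1))"

context
  fixes z :: "real set" and \<rho> :: real
  assumes z: "finite z" and \<rho>: "0 < \<rho>" and z2: "2 \<le> card z"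
begin

lemma gamma0_pos: "0 < gamma0 (card z - 1)"
  unfolding gamma0_eq_choose using z2 by (simp add: zero_less_binomial_iff)

lemma arg_total_rate_pi0: "arg_total_rate z \<rho> (pi0 z) = gamma0 (card z - 1)"
  unfolding gamma0_eq_choose using arg_total_rate_eq[OF z partition_pi0] by simp

lemma arg_total_rate_bounds:
  assumes "partition_on z r"
  shows "\<rho> * cover_length r \<le> arg_total_rate z \<rho> r"
    "arg_total_rate z \<rho> r \<le> gamma0 (card z - 1) + \<rho> * cover_length r"
proof -
  have "card r choose 2 \<le> card z choose 2" using card_partition_le[OF z assms] by (rule binomial_right_mono)
  then show "\<rho> * cover_length r \<le> arg_total_rate z \<rho> r"
    "arg_total_rate z \<rho> r \<le> gamma0 (card z - 1) + \<rho> * cover_length r"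
    unfolding gamma0_eq_choose using arg_total_rate_eq[OF z assms] by simp_all
qed

lemma arg_jump_nonzero_cases:
  assumes "arg_jump z \<rho> r q \<noteq> 0"
  shows "is_merge r q \<or> split_events r q \<noteq> {}"
  using assms arg_rate_nonzero_cases unfolding arg_jump_def by (auto split: if_splits)

lemma main_term_nonneg: "partition_on z q \<Longrightarrow> 0 \<le> main_term z \<rho> q"
  unfolding main_term_def using cover_length_nonneg[OF z] F_fun_nonneg[OF z] \<rho> gamma0_pos
  by (intro divide_nonneg_pos mult_nonneg_nonneg) auto

lemma main_term_pos:
  assumes "partition_on z q" "q \<noteq> pi0 z"
  shows "0 < main_term z \<rho> q"
proof -
  have "0 < partition_weight q / real (card z) ^ (card z - card q)" using z2 by simp
  then have "0 < F_fun z q" using weight_le_F_fun[OF z assms(1)] by linarith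
  moreover have "0 < cover_length q" using cover_length_ge_min_dist[OF z assms] by linarith
  ultimately show ?thesis unfolding main_term_def using \<rho> gamma0_pos by simp
qed

lemma main_term_merge_rec:
  assumes q: "partition_on z q" "q \<noteq> pi0 z"
  shows "(\<Sum>r\<in>merge_preds z q - {pi0 z}. main_term z \<rho> r / (\<rho> * cover_length r))
      + (if pi0 z \<in> merge_preds z q then 1 / gamma0 (card z - 1) else 0) = main_term z \<rho> q"
proof -
  define l where "l = card z - card q"
  define D where "D = \<rho> ^ (l - 1) * gamma0 (card z - 1)"
  have C: "0 < cover_length q" using cover_length_ge_min_dist[OF z q] by linarith
  have pred_term: "main_term z \<rho> r / (\<rho> * cover_length r) = F_fun z r / D"
    if r: "r \<in> merge_preds z q - {pi0 z}" for r
  proof -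
    have rp: "partition_on z r" "card q + 1 = card r" using merge_preds_card[OF z] r by auto
    have "0 < cover_length r" using cover_length_ge_min_dist[OF z rp(1)] r by auto
    moreover have "card r < card z" using card_lt_if_not_pi0[OF z rp(1)] r by auto
    then have "l - 1 = Suc (card z - card r - 1)" using rp(2) unfolding l_def by simp
    then have "\<rho> ^ (card z - card r - 1) * \<rho> = \<rho> ^ (l - 1)" by (simp only: power_Suc2)
    ultimately show ?thesis unfolding main_term_def D_def using \<rho> by (simp add: field_simps)
  qed
  have pi0_term: "(if pi0 z \<in> merge_preds z q then 1 / gamma0 (card z - 1) else 0)
      = (if pi0 z \<in> merge_preds z q then F_fun z (pi0 z) / D else 0)"
  proof (cases "pi0 z \<in> merge_preds z q")
    case True
    then have "l = 1" using merge_preds_card(2)[OF z True] unfolding l_def by simp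
    then show ?thesis using True z unfolding D_def by simp
  qed simp
  have "(\<Sum>r\<in>merge_preds z q - {pi0 z}. main_term z \<rho> r / (\<rho> * cover_length r))
      + (if pi0 z \<in> merge_preds z q then F_fun z (pi0 z) / D else 0)
      = (\<Sum>r\<in>merge_preds z q. F_fun z r / D)"
  proof (cases "pi0 z \<in> merge_preds z q")
    case True
    then show ?thesis using pred_term sum.remove[OF finite_merge_preds[OF z] True, of "\<lambda>r. F_fun z r / D"]
      by simp
  qed (use pred_term in simp)
  also have "\<dots> = cover_length q * F_fun z q / D"
  proof -
    have "cover_length q * F_fun z q = (\<Sum>r\<in>merge_preds z q. F_fun z r)" using F_fun_rec[OF z q(2)] C by simp
    then show ?thesis by (simp add: sum_divide_distrib)
  qed
  also have "\<dots> = main_term z \<rho> q" unfolding main_term_def D_def l_def ..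
  finally show ?thesis unfolding pi0_term .
qed

lemma main_term_split_le:
  assumes r: "partition_on z r" and split: "split_events r q \<noteq> {}" and q: "q \<noteq> pi0 z"
  shows "main_term z \<rho> r \<le> F_split_const (card z) / (min_dist z * \<rho>) * main_term z \<rho> q"
proof -
  obtain b x y where "b \<in> r" "(x, y) \<in> adjacent_pairs b" "q = split_block r b x y"
    using split unfolding split_events_eq by auto
  then have qp: "partition_on z q" and card: "card q = card r + 1"
    using partition_split_block[OF r] card_split_block[OF z r] by auto
  define l where "l = card z - card q"
  have l: "card z - card r - 1 = l" "l = Suc (l - 1)"
    using card card_lt_if_not_pi0[OF z qp q] unfolding l_def by auto
  have \<alpha>: "0 < min_dist z" using cover_length_ge_min_dist[OF z qp q] by simp
  define D where "D = min_dist z * \<rho> ^ l * gamma0 (card z - 1)"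
  have D: "0 < D" unfolding D_def using \<alpha> \<rho> gamma0_pos by simp
  have "main_term z \<rho> r = min_dist z * cover_length r * F_fun z r / D"
    unfolding main_term_def D_def l(1) using \<alpha> by simp
  also have "\<dots> \<le> F_split_const (card z) * cover_length q * F_fun z q / D"
    using F_fun_split_le[OF z r split q] D by (intro divide_right_mono) auto
  also have "\<dots> = F_split_const (card z) / (min_dist z * \<rho>) * main_term z \<rho> q"
    unfolding main_term_def D_def l_def[symmetric] using \<alpha> \<rho> gamma0_pos
    by (subst l(2)) (simp add: field_simps)
  finally show ?thesis .
qed

lemma arg_jump_pi0:
  "arg_jump z \<rho> (pi0 z) q = (if pi0 z \<in> merge_preds z q then 1 / gamma0 (card z - 1) else 0)"
proof (cases "is_merge (pi0 z) q")
  case True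
  then show ?thesis using arg_jump_merge[OF z partition_pi0 True] arg_total_rate_pi0 pi0_in_partitions_of
    unfolding merge_preds_def by simp
next
  case False
  have "arg_jump z \<rho> (pi0 z) q = 0"
  proof (rule ccontr)
    assume "arg_jump z \<rho> (pi0 z) q \<noteq> 0"
    then show False using arg_jump_nonzero_cases[of "pi0 z" q] False by simp
  qed
  then show ?thesis using False unfolding merge_preds_def by simp
qed

lemma merge_contribution_le:
  assumes \<delta>: "0 \<le> \<delta>" and q: "partition_on z q" "q \<noteq> pi0 z"
  shows "arg_jump z \<rho> (pi0 z) q + (\<Sum>r\<in>merge_preds z q - {pi0 z}.
      (1 + \<delta>) ^ (card z - card r) * main_term z \<rho> r * arg_jump z \<rho> r q)
    \<le> (1 + \<delta>) ^ (card z - card q - 1) * main_term z \<rho> q"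
proof -
  define l where "l = card z - card q"
  define \<gamma> where "\<gamma> = gamma0 (card z - 1)"
  note pi0 = arg_jump_pi0[of q, folded \<gamma>_def]
  have pred: "(1 + \<delta>) ^ (card z - card r) * main_term z \<rho> r * arg_jump z \<rho> r q
      \<le> (1 + \<delta>) ^ (l - 1) * (main_term z \<rho> r / (\<rho> * cover_length r))"
    if r: "r \<in> merge_preds z q - {pi0 z}" for r
  proof -
    have rp: "partition_on z r" "card q + 1 = card r" using merge_preds_card[OF z] r by auto
    have m: "is_merge r q" using r unfolding merge_preds_def by simp
    have "0 < \<rho> * cover_length r" using cover_length_ge_min_dist[OF z rp(1)] r \<rho> by auto
    then have "arg_jump z \<rho> r q \<le> 1 / (\<rho> * cover_length r)"
      unfolding arg_jump_merge[OF z rp(1) m] using arg_total_rate_bounds(1)[OF rp(1)]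
      by (intro divide_left_mono) auto
    then have "main_term z \<rho> r * arg_jump z \<rho> r q \<le> main_term z \<rho> r / (\<rho> * cover_length r)"
      using main_term_nonneg[OF rp(1)] mult_left_mono by fastforce
    then have "(1 + \<delta>) ^ (l - 1) * (main_term z \<rho> r * arg_jump z \<rho> r q)
        \<le> (1 + \<delta>) ^ (l - 1) * (main_term z \<rho> r / (\<rho> * cover_length r))"
      using \<delta> by (intro mult_left_mono) auto
    moreover have "card z - card r = l - 1" using rp(2) unfolding l_def by simp
    ultimately show ?thesis by (simp add: mult.assoc)
  qed
  have "arg_jump z \<rho> (pi0 z) q + (\<Sum>r\<in>merge_preds z q - {pi0 z}.
      (1 + \<delta>) ^ (card z - card r) * main_term z \<rho> r * arg_jump z \<rho> r q)
    \<le> (1 + \<delta>) ^ (l - 1) * (if pi0 z \<in> merge_preds z q then 1 / \<gamma> else 0)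
      + (\<Sum>r\<in>merge_preds z q - {pi0 z}. (1 + \<delta>) ^ (l - 1) * (main_term z \<rho> r / (\<rho> * cover_length r)))"
    unfolding pi0 using pred \<delta> gamma0_pos unfolding \<gamma>_def
    by (intro add_mono sum_mono) (auto simp: mult_le_cancel_right1)
  also have "\<dots> = (1 + \<delta>) ^ (l - 1) * main_term z \<rho> q"
    unfolding main_term_merge_rec[OF q, symmetric] \<gamma>_def by (simp add: sum_distrib_left algebra_simps)
  finally show ?thesis unfolding l_def .
qed

lemma split_contribution_le:
  assumes \<delta>: "0 < \<delta>" "\<delta> \<le> 1"
    and large: "4 * real (card (partitions_of z)) * F_split_const (card z) \<le> \<delta> * (min_dist z * \<rho>)"
    and q: "partition_on z q" "q \<noteq> pi0 z"
  shows "(\<Sum>r\<in>{r \<in> partitions_of z - {pi0 z}. split_events r q \<noteq> {}}.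
      (1 + \<delta>) ^ (card z - card r) * main_term z \<rho> r * arg_jump z \<rho> r q)
    \<le> \<delta> * ((1 + \<delta>) ^ (card z - card q - 1) * main_term z \<rho> q)"
proof -
  define l where "l = card z - card q"
  define B where "B = (1 + \<delta>) ^ (l + 1) * (F_split_const (card z) / (min_dist z * \<rho>) * main_term z \<rho> q)"
  define Sp where "Sp = {r \<in> partitions_of z - {pi0 z}. split_events r q \<noteq> {}}"
  have \<alpha>: "0 < min_dist z" using cover_length_ge_min_dist[OF z q] by simp
  have K: "0 \<le> F_split_const (card z)"
    unfolding F_split_const_def using F_growth_const_ge_1[of "card z"] by simp
  have B: "0 \<le> B" unfolding B_def using \<delta> \<alpha> \<rho> K main_term_nonneg[OF q(1)] by simp
  have each: "(1 + \<delta>) ^ (card z - card r) * main_term z \<rho> r * arg_jump z \<rho> r q \<le> B" if r: "r \<in> Sp" for r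
  proof -
    have rp: "partition_on z r" "split_events r q \<noteq> {}" using r unfolding Sp_def partitions_of_def by auto
    have "card z - card r = l + 1"
      using card_split_event[OF z rp] card_lt_if_not_pi0[OF z q] unfolding l_def by simp
    moreover have "arg_jump z \<rho> r q \<le> 1" using arg_jump_le_1[OF z] q(1) \<rho> by (simp add: partitions_of_def)
    ultimately have "(1 + \<delta>) ^ (card z - card r) * main_term z \<rho> r * arg_jump z \<rho> r q
        \<le> (1 + \<delta>) ^ (l + 1) * main_term z \<rho> r"
      using \<delta> main_term_nonneg[OF rp(1)] arg_jump_nonneg[of \<rho> z r q] \<rho> by (simp add: mult_left_le)
    also have "\<dots> \<le> B"
      unfolding B_def using main_term_split_le[OF rp q(2)] \<delta> by (intro mult_left_mono) auto
    finally show ?thesis .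
  qed
  have "(\<Sum>r\<in>Sp. (1 + \<delta>) ^ (card z - card r) * main_term z \<rho> r * arg_jump z \<rho> r q)
      \<le> real (card Sp) * B"
    using sum_mono[OF each] by simp
  also have "\<dots> \<le> real (card (partitions_of z)) * B"
    using B finitely_many_partition_on[OF z] unfolding Sp_def partitions_of_def
    by (intro mult_right_mono) (auto intro: card_mono)
  also have "\<dots> = ((1 + \<delta>)\<^sup>2 * (real (card (partitions_of z)) * F_split_const (card z) / (min_dist z * \<rho>)))
      * ((1 + \<delta>) ^ (l - 1) * main_term z \<rho> q)"
  proof -
    have "l + 1 = 2 + (l - 1)" using card_lt_if_not_pi0[OF z q] unfolding l_def by simp
    then have "(1 + \<delta>) ^ (l + 1) = (1 + \<delta>)\<^sup>2 * (1 + \<delta>) ^ (l - 1)" by (simp only: power_add)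
    then show ?thesis unfolding B_def by (simp add: field_simps)
  qed
  also have "\<dots> \<le> \<delta> * ((1 + \<delta>) ^ (l - 1) * main_term z \<rho> q)"
  proof (rule mult_right_mono)
    have "(1 + \<delta>) * (1 + \<delta>) \<le> 2 * 2" using \<delta> by (intro mult_mono) auto
    then have "(1 + \<delta>)\<^sup>2 \<le> 4" by (simp add: power2_eq_square)
    moreover define c where "c = real (card (partitions_of z)) * F_split_const (card z) / (min_dist z * \<rho>)"
    moreover have "c \<le> \<delta> / 4" "0 \<le> c" unfolding c_def using large \<alpha> \<rho> K by (simp_all add: field_simps)
    ultimately have "(1 + \<delta>)\<^sup>2 * c \<le> 4 * (\<delta> / 4)" by (intro mult_mono) auto
    then show "(1 + \<delta>)\<^sup>2 * (real (card (partitions_of z)) * F_split_const (card z) / (min_dist z * \<rho>)) \<le> \<delta>"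
      unfolding c_def by simp
    show "0 \<le> (1 + \<delta>) ^ (l - 1) * main_term z \<rho> q" using \<delta> main_term_nonneg[OF q(1)] by simp
  qed
  finally show ?thesis unfolding Sp_def l_def .
qed

(* Merges into q reproduce the main term exactly (main_term_merge_rec); a split costs a factor
   F_split_const (card z) / (min_dist z * \<rho>) (main_term_split_le), which the extra factor 1 + \<delta>
   absorbs. *)
lemma main_term_supersolution:
  assumes \<delta>: "0 < \<delta>" "\<delta> \<le> 1"
    and large: "4 * real (card (partitions_of z)) * F_split_const (card z) \<le> \<delta> * (min_dist z * \<rho>)"
    and q: "partition_on z q" "q \<noteq> pi0 z"
  defines "H \<equiv> \<lambda>r. (1 + \<delta>) ^ (card z - card r) * main_term z \<rho> r"
  shows "arg_jump z \<rho> (pi0 z) q + (\<Sum>r\<in>partitions_of z - {pi0 z}. H r * arg_jump z \<rho> r q) \<le> H q"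
proof -
  define S where "S = partitions_of z - {pi0 z}"
  define f where "f r = H r * arg_jump z \<rho> r q" for r
  have fS: "finite S" unfolding S_def partitions_of_def using finitely_many_partition_on[OF z] by simp
  have f: "f r \<le> (if is_merge r q then f r else 0) + (if split_events r q \<noteq> {} then f r else 0)"
    if "r \<in> S" for r
  proof -
    have "0 \<le> f r" unfolding f_def H_def
      using that \<delta> main_term_nonneg arg_jump_nonneg[of \<rho> z r q] \<rho> unfolding S_def partitions_of_def by simp
    then show ?thesis using arg_jump_nonzero_cases[of r q] unfolding f_def by auto
  qed
  have merges: "{r \<in> S. is_merge r q} = merge_preds z q - {pi0 z}" unfolding S_def merge_preds_def by auto
  have "(\<Sum>r\<in>S. f r) \<le> (\<Sum>r\<in>merge_preds z q - {pi0 z}. f r) + (\<Sum>r\<in>{r \<in> S. split_events r q \<noteq> {}}. f r)"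
    using sum_mono[OF f] fS unfolding merges[symmetric] by (simp add: sum.distrib sum.inter_filter)
  moreover have "arg_jump z \<rho> (pi0 z) q + (\<Sum>r\<in>merge_preds z q - {pi0 z}. f r)
      \<le> (1 + \<delta>) ^ (card z - card q - 1) * main_term z \<rho> q"
    using merge_contribution_le[OF less_imp_le[OF \<delta>(1)] q] unfolding f_def H_def .
  moreover have "(\<Sum>r\<in>{r \<in> S. split_events r q \<noteq> {}}. f r)
      \<le> \<delta> * ((1 + \<delta>) ^ (card z - card q - 1) * main_term z \<rho> q)"
    using split_contribution_le[OF \<delta> large q] unfolding f_def H_def S_def .
  ultimately have "arg_jump z \<rho> (pi0 z) q + (\<Sum>r\<in>S. f r)
      \<le> (1 + \<delta>) ^ (card z - card q - 1) * main_term z \<rho> q + \<delta> * ((1 + \<delta>) ^ (card z - card q - 1) * main_term z \<rho> q)"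
    by linarith
  also have "\<dots> = (1 + \<delta>) ^ Suc (card z - card q - 1) * main_term z \<rho> q" by (simp add: algebra_simps)
  also have "\<dots> = H q" unfolding H_def using card_lt_if_not_pi0[OF z q] by (simp add: Suc_diff_Suc)
  finally show ?thesis unfolding f_def S_def .
qed

lemma arg_hit_prob_le:
  assumes \<delta>: "0 < \<delta>" "\<delta> \<le> 1"
    and large: "4 * real (card (partitions_of z)) * F_split_const (card z) \<le> \<delta> * (min_dist z * \<rho>)"
    and P: "partition_on z P" "P \<noteq> pi0 z"
  shows "arg_hit_prob z \<rho> P \<le> (1 + \<delta>) ^ (card z - card P) * main_term z \<rho> P"
    and "summable (hit_path_sum (partitions_of z) (arg_jump z \<rho>) (pi0 z) P)"
proof -
  have S: "finite (partitions_of z)" unfolding partitions_of_def using finitely_many_partition_on[OF z] .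
  have p: "0 \<le> arg_jump z \<rho> x y" for x y using arg_jump_nonneg \<rho> by simp
  define H where "H r = (1 + \<delta>) ^ (card z - card r) * main_term z \<rho> r" for r
  have H: "0 \<le> H q" if "q \<in> partitions_of z - {pi0 z}" for q
    using that main_term_nonneg \<delta> unfolding H_def by (simp add: partitions_of_def)
  have super: "arg_jump z \<rho> (pi0 z) q + (\<Sum>r\<in>partitions_of z - {pi0 z}. H r * arg_jump z \<rho> r q) \<le> H q"
    if "q \<in> partitions_of z - {pi0 z}" for q
    using main_term_supersolution[OF \<delta> large, of q] that unfolding H_def by (simp add: partitions_of_def)
  have P': "P \<in> partitions_of z - {pi0 z}" using P by (simp add: partitions_of_def)
  show "arg_hit_prob z \<rho> P \<le> (1 + \<delta>) ^ (card z - card P) * main_term z \<rho> P"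
    and "summable (hit_path_sum (partitions_of z) (arg_jump z \<rho>) (pi0 z) P)"
    using hit_before_return_le_supersolution[where p = "arg_jump z \<rho>" and H = H, OF S p H super P']
    unfolding arg_hit_prob_def H_def by auto
qed

lemma energy_eq_prod_list: "energy s = prod_list (map cover_length (tl s))"
proof (cases s)
  case (Cons a t)
  have "energy s = (\<Prod>i\<in>{0..<length t}. cover_length (t ! i))"
    unfolding energy_def Cons using prod.shift_bounds_Suc_ivl[of "\<lambda>i. cover_length ((a # t) ! i)" 0 "length t"]
    by simp
  also have "\<dots> = prod_list (map cover_length t)" by (simp add: prod.list_conv_set_nth)
  finally show ?thesis using Cons by simp
qed (simp add: energy_def)

lemma arg_jump_merge_ge:
  assumes y: "partition_on z y" "y \<noteq> pi0 z" and m: "is_merge y y'"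
  shows "min_dist z * \<rho> / (min_dist z * \<rho> + gamma0 (card z - 1)) / \<rho> / cover_length y
    \<le> arg_jump z \<rho> y y'"
proof -
  define \<gamma> where "\<gamma> = gamma0 (card z - 1)"
  have \<alpha>: "0 < min_dist z" "min_dist z \<le> cover_length y" using cover_length_ge_min_dist[OF z y] by auto
  then have "0 < \<rho> * cover_length y" using \<rho> by (simp add: less_le_trans)
  have "min_dist z * \<rho> / (min_dist z * \<rho> + \<gamma>) / (\<rho> * cover_length y) \<le> 1 / (\<gamma> + \<rho> * cover_length y)"
    using \<alpha> \<rho> gamma0_pos unfolding \<gamma>_def by (intro ratio_div_le_inverse_add) auto
  also have "\<dots> \<le> 1 / arg_total_rate z \<rho> y"
    using arg_total_rate_bounds[OF y(1)] \<open>0 < \<rho> * cover_length y\<close> gamma0_pos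
    unfolding \<gamma>_def by (intro divide_left_mono mult_pos_pos) auto
  finally show ?thesis using arg_jump_merge[OF z y(1) m] \<rho> unfolding \<gamma>_def by (simp add: divide_divide_eq_left)
qed

lemma scenario_inner:
  assumes s: "s \<in> scenarios z P" and P: "P \<noteq> pi0 z" and k: "card P + k = card z"
  shows "s = pi0 z # butlast (tl s) @ [P]" "length (butlast (tl s)) = k - 1"
    "set (butlast (tl s)) \<subseteq> partitions_of z - {pi0 z, P}"
proof -
  define ys where "ys = butlast (tl s)"
  have len: "length s = Suc k" using scenarios_length[OF z s] k by simp
  have "P \<in> set s" using s last_in_set unfolding scenarios_def by auto
  then have Pp: "partition_on z P" using scenarios_partitions[OF z s] by (auto simp: partitions_of_def)
  have k1: "1 \<le> k" using card_lt_if_not_pi0[OF z Pp P] k by simp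
  have s_def: "s = pi0 z # tl s" using s unfolding scenarios_def by (cases s) auto
  have ne: "tl s \<noteq> []" using len k1 s_def by (cases "tl s") auto
  have "last s = P" using s unfolding scenarios_def by auto
  then have "last (tl s) = P" using ne by (subst (asm) s_def) simp
  then have tl: "tl s = ys @ [P]" unfolding ys_def using append_butlast_last_id[OF ne] by simp
  then show "s = pi0 z # butlast (tl s) @ [P]" using s_def unfolding ys_def by simp
  show lys: "length (butlast (tl s)) = k - 1" using len by simp
  show "set (butlast (tl s)) \<subseteq> partitions_of z - {pi0 z, P}"
  proof
    fix y assume "y \<in> set (butlast (tl s))"
    then obtain i where i: "i < length ys" "y = ys ! i" unfolding ys_def by (auto simp: in_set_conv_nth)
    then have "y = tl s ! i" unfolding tl by (simp add: nth_append)
    also have "\<dots> = s ! Suc i" using ne by (cases s) auto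
    finally have "y = s ! Suc i" "Suc i < k" using i(1) lys unfolding ys_def by auto
    then show "y \<in> partitions_of z - {pi0 z, P}"
      using scenarios_nth[OF z s, of "Suc i"] len k by (auto simp: partitions_of_def)
  qed
qed

lemma scenario_path_prob_ge:
  assumes s: "s \<in> scenarios z P" and P: "P \<noteq> pi0 z" and k: "card P + k = card z"
  defines "c \<equiv> min_dist z * \<rho> / (min_dist z * \<rho> + gamma0 (card z - 1))"
  shows "c ^ (k - 1) * (cover_length P / (\<rho> ^ (k - 1) * gamma0 (card z - 1)) / energy s)
    \<le> path_prob (arg_jump z \<rho>) s"
proof -
  define \<gamma> where "\<gamma> = gamma0 (card z - 1)"
  define g where "g y = (if y = pi0 z then 1 / \<gamma> else c / \<rho> / cover_length y)" for y
  have s_nth: "partition_on z (s ! i)" "card (s ! i) + i = card z" if "i < length s" for i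
    using scenarios_nth[OF z s that] by auto
  have len: "length s = Suc k" using scenarios_length[OF z s] k by simp
  have s0: "s ! 0 = pi0 z" and sk: "s ! k = P" using s len unfolding scenarios_def by (auto simp: hd_conv_nth last_conv_nth)
  have Pp: "partition_on z P" using s_nth(1)[of k] sk len by simp
  have \<alpha>: "0 < min_dist z" using cover_length_ge_min_dist[OF z Pp P] by simp
  have c: "0 \<le> c" unfolding c_def using \<alpha> \<rho> gamma0_pos by simp
  have g_nonneg: "0 \<le> g y" if "y \<in> set s" for y
    using scenarios_partitions[OF z s] that cover_length_nonneg[OF z] c \<rho> gamma0_pos
    unfolding g_def \<gamma>_def partitions_of_def by auto
  have step: "g (s ! i) \<le> arg_jump z \<rho> (s ! i) (s ! Suc i)" if i: "Suc i < length s" for i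
  proof -
    have m: "is_merge (s ! i) (s ! Suc i)" using s i unfolding scenarios_def by auto
    have sp: "partition_on z (s ! i)" using s_nth(1)[of i] i by simp
    show ?thesis
    proof (cases "i = 0")
      case True
      then show ?thesis using arg_jump_merge[OF z sp m] arg_total_rate_pi0 s0 unfolding g_def \<gamma>_def by simp
    next
      case False
      then have "s ! i \<noteq> pi0 z" using s_nth(2)[of i] i by auto
      then show ?thesis using arg_jump_merge_ge[OF sp _ m] unfolding g_def c_def by simp
    qed
  qed
  define ys where "ys = butlast (tl s)"
  note inner = scenario_inner[OF s P k, folded ys_def]
  have tl: "tl s = ys @ [P]" and bl: "butlast s = pi0 z # ys"
    by (subst inner(1); simp)+
  note lys = inner(2)
  have ys: "y \<noteq> pi0 z" if "y \<in> set ys" for y using inner(3) that by auto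
  have CP: "0 < cover_length P" using cover_length_ge_min_dist[OF z Pp P] \<alpha> by linarith
  have "c ^ (k - 1) * (cover_length P / (\<rho> ^ (k - 1) * \<gamma>) / energy s)
      = c ^ (k - 1) * cover_length P / ((\<rho> ^ (k - 1) * \<gamma> * prod_list (map cover_length ys)) * cover_length P)"
    unfolding energy_eq_prod_list tl by (simp add: mult_ac)
  also have "\<dots> = 1 / \<gamma> * ((c / \<rho>) ^ length ys / prod_list (map cover_length ys))"
    unfolding mult_divide_mult_cancel_right[OF less_imp_neq[OF CP, symmetric]] lys
    by (simp add: power_divide divide_divide_eq_left mult_ac)
  also have "\<dots> = prod_list (map g (butlast s))"
    unfolding bl g_def prod_list_map_divide[symmetric] using ys by (simp cong: map_cong)
  also have "\<dots> \<le> path_prob (arg_jump z \<rho>) s"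
    by (rule path_prob_ge_prod_list[where p = "arg_jump z \<rho>", OF g_nonneg step])
  finally show ?thesis unfolding \<gamma>_def .
qed

lemma arg_hit_prob_ge:
  assumes P: "partition_on z P" "P \<noteq> pi0 z" and k: "card P + k = card z"
    and sum: "summable (hit_path_sum (partitions_of z) (arg_jump z \<rho>) (pi0 z) P)"
  shows "(min_dist z * \<rho> / (min_dist z * \<rho> + gamma0 (card z - 1))) ^ (k - 1) * main_term z \<rho> P
    \<le> arg_hit_prob z \<rho> P"
proof -
  define c where "c = min_dist z * \<rho> / (min_dist z * \<rho> + gamma0 (card z - 1))"
  define L where "L = {xs. length xs = k - 1 \<and> set xs \<subseteq> partitions_of z - {pi0 z, P}}"
  define inner where "inner s = butlast (tl s)" for s :: "real set set list"
  have recon: "s = pi0 z # inner s @ [P]" if "s \<in> scenarios z P" for s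
    using scenario_inner(1)[OF that P(2) k] unfolding inner_def .
  have inj: "inj_on inner (scenarios z P)" by (rule inj_onI) (metis recon)
  have inner_L: "inner ` scenarios z P \<subseteq> L"
    using scenario_inner(2,3)[OF _ P(2) k] unfolding inner_def L_def by auto
  have fL: "finite L" unfolding L_def
    using finite_lists_length_eq[of "partitions_of z - {pi0 z, P}" "k - 1"] finitely_many_partition_on[OF z]
    by (simp add: partitions_of_def conj_commute)
  have "c ^ (k - 1) * main_term z \<rho> P
      = (\<Sum>s\<in>scenarios z P. c ^ (k - 1) * (cover_length P / (\<rho> ^ (k - 1) * gamma0 (card z - 1)) / energy s))"
  proof -
    have "card z - card P - 1 = k - 1" using k by simp
    then show ?thesis unfolding main_term_def F_fun_def
      by (simp add: sum_distrib_left sum_divide_distrib divide_divide_eq_left mult_ac)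
  qed
  also have "\<dots> \<le> (\<Sum>s\<in>scenarios z P. path_prob (arg_jump z \<rho>) (pi0 z # inner s @ [P]))"
    using scenario_path_prob_ge[OF _ P(2) k] recon unfolding c_def by (intro sum_mono) auto
  also have "\<dots> = (\<Sum>xs\<in>inner ` scenarios z P. path_prob (arg_jump z \<rho>) (pi0 z # xs @ [P]))"
    by (simp add: sum.reindex[OF inj])
  also have "\<dots> \<le> (\<Sum>xs\<in>L. path_prob (arg_jump z \<rho>) (pi0 z # xs @ [P]))"
    using fL inner_L path_prob_nonneg[of "arg_jump z \<rho>"] arg_jump_nonneg \<rho> by (intro sum_mono2) auto
  also have "\<dots> = hit_path_sum (partitions_of z) (arg_jump z \<rho>) (pi0 z) P (k - 1)"
    unfolding hit_path_sum_def L_def ..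
  also have "\<dots> \<le> arg_hit_prob z \<rho> P"
    unfolding arg_hit_prob_def using arg_jump_nonneg \<rho> by (intro hit_path_sum_le_hit_before_return[OF sum]) auto
  finally show ?thesis unfolding c_def .
qed

end

lemma card_partitions_of_le: "finite z \<Longrightarrow> card (partitions_of z) \<le> 2 ^ 2 ^ card z"
proof -
  assume z: "finite z"
  have "partitions_of z \<subseteq> Pow (Pow z)" unfolding partitions_of_def partition_on_def by auto
  then have "card (partitions_of z) \<le> card (Pow (Pow z))" using z by (intro card_mono) auto
  then show ?thesis using z by (simp add: card_Pow)
qed

(* 2 ^ 2 ^ (n + 1) bounds the number of partitions of z (card_partitions_of_le). *)
definition error_threshold :: "nat \<Rightarrow> real" where
  "error_threshold n = 4 * 2 ^ 2 ^ (n + 1) * F_split_const (n + 1)"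

definition error_bound :: "nat \<Rightarrow> real \<Rightarrow> real" where
  "error_bound n x = ((1 + error_threshold n / x) ^ n - 1) + (1 - (x / (x + gamma0 n)) ^ n)"

lemma error_threshold_pos: "0 < error_threshold n"
  unfolding error_threshold_def F_split_const_def using F_growth_const_ge_1[of "n + 1"] by simp

lemma error_bound_tendsto_0: "(error_bound n \<longlongrightarrow> 0) at_top"
proof -
  have inv: "((\<lambda>x::real. a / x) \<longlongrightarrow> 0) at_top" for a
    by (rule tendsto_divide_0[OF tendsto_const filterlim_at_top_imp_at_infinity[OF filterlim_ident]])
  have "((\<lambda>x. (1 + error_threshold n / x) ^ n - 1) \<longlongrightarrow> (1 + 0) ^ n - 1) at_top"
    by (intro tendsto_intros inv)
  moreover have "((\<lambda>x. 1 - (1 / (1 + gamma0 n / x)) ^ n) \<longlongrightarrow> 1 - (1 / (1 + 0)) ^ n) at_top"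
    by (intro tendsto_intros inv) simp
  moreover have "\<forall>\<^sub>F x in at_top. 1 - (1 / (1 + gamma0 n / x)) ^ n = 1 - (x / (x + gamma0 n)) ^ n"
    using eventually_gt_at_top[of 0] by eventually_elim (simp add: field_simps)
  ultimately have "((\<lambda>x. (1 + error_threshold n / x) ^ n - 1) \<longlongrightarrow> 0) at_top"
    "((\<lambda>x. 1 - (x / (x + gamma0 n)) ^ n) \<longlongrightarrow> 0) at_top"
    by (simp_all add: tendsto_cong)
  then have "((\<lambda>x. ((1 + error_threshold n / x) ^ n - 1) + (1 - (x / (x + gamma0 n)) ^ n))
      \<longlongrightarrow> 0 + 0) at_top"
    by (rule tendsto_add)
  then show ?thesis unfolding error_bound_def[abs_def] by simp
qed

lemma partitions_r_main_term:
  assumes z: "finite z" "card z = n + 1" and \<rho>: "0 < \<rho>" and k: "1 \<le> k" "k \<le> n" and P: "P \<in> partitions_r z k"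
  shows "cover_length P / (\<rho> ^ (k - 1) * gamma0 n) * F_fun z P = main_term z \<rho> P"
    "0 < main_term z \<rho> P"
proof -
  have Pp: "partition_on z P" and Pk: "card P + k = card z"
    using P unfolding partitions_r_def partitions_of_def by auto
  have "card z - card P - 1 = k - 1" "card z - 1 = n" using Pk z(2) by auto
  then show "cover_length P / (\<rho> ^ (k - 1) * gamma0 n) * F_fun z P = main_term z \<rho> P"
    unfolding main_term_def by (simp add: mult_ac)
  have "2 \<le> card z" "P \<noteq> pi0 z" using Pk k z(2) by auto
  then show "0 < main_term z \<rho> P" using main_term_pos[OF z(1) \<rho> _ Pp] by simp
qed

lemma arg_hit_prob_rel_error:
  assumes z: "finite z" "card z = n + 1" and \<rho>: "0 < \<rho>" and k: "1 \<le> k" "k \<le> n"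
    and P: "P \<in> partitions_r z k" and large: "error_threshold n \<le> min_dist z * \<rho>"
  shows "\<bar>arg_hit_prob z \<rho> P - main_term z \<rho> P\<bar> \<le> error_bound n (min_dist z * \<rho>) * main_term z \<rho> P"
proof -
  define t where "t = main_term z \<rho> P"
  define x where "x = min_dist z * \<rho>"
  define \<delta> where "\<delta> = error_threshold n / x"
  define c where "c = x / (x + gamma0 n)"
  have z2: "2 \<le> card z" using z k by simp
  have Pp: "partition_on z P" and Pk: "card P + k = card z"
    using P unfolding partitions_r_def partitions_of_def by auto
  have P0: "P \<noteq> pi0 z" using Pk k by auto
  have t_pos: "0 < t" unfolding t_def using partitions_r_main_term(2)[OF z \<rho> k P] .
  have x: "0 < x" using error_threshold_pos large unfolding x_def by (rule less_le_trans)
  have \<delta>: "0 < \<delta>" "\<delta> \<le> 1" using x error_threshold_pos large unfolding \<delta>_def x_def by auto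
  have "real (card (partitions_of z)) \<le> 2 ^ 2 ^ (n + 1)"
    using card_partitions_of_le[OF z(1)] z(2) by (metis of_nat_le_iff of_nat_numeral of_nat_power)
  then have "4 * real (card (partitions_of z)) * F_split_const (card z) \<le> 4 * 2 ^ 2 ^ (n + 1) * F_split_const (n + 1)"
    unfolding z(2) using F_growth_const_ge_1[of "n + 1"] by (intro mult_right_mono) (auto simp: F_split_const_def)
  also have "\<dots> = \<delta> * (min_dist z * \<rho>)" using x unfolding \<delta>_def x_def[symmetric] error_threshold_def by simp
  finally have big: "4 * real (card (partitions_of z)) * F_split_const (card z) \<le> \<delta> * (min_dist z * \<rho>)" .
  note upper = arg_hit_prob_le[OF z(1) \<rho> z2 \<delta> big Pp P0]
  have c: "0 \<le> c" "c \<le> 1" unfolding c_def using x gamma0_pos[OF z(1) \<rho> z2] z(2) by auto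
  have "arg_hit_prob z \<rho> P \<le> (1 + \<delta>) ^ (card z - card P) * t" using upper(1) unfolding t_def .
  also have "\<dots> \<le> (1 + \<delta>) ^ n * t"
    using Pk k \<delta> t_pos by (intro mult_right_mono power_increasing) auto
  finally have "arg_hit_prob z \<rho> P \<le> (1 + \<delta>) ^ n * t" .
  moreover have "c ^ n * t \<le> arg_hit_prob z \<rho> P"
  proof -
    have "c ^ n * t \<le> c ^ (k - 1) * t" using c k t_pos by (intro mult_right_mono power_decreasing) auto
    also have "\<dots> \<le> arg_hit_prob z \<rho> P"
      using arg_hit_prob_ge[OF z(1) \<rho> z2 Pp P0 Pk upper(2)] z(2) unfolding c_def x_def t_def by simp
    finally show ?thesis .
  qed
  ultimately have "arg_hit_prob z \<rho> P - t \<le> ((1 + \<delta>) ^ n - 1) * t" "t - arg_hit_prob z \<rho> P \<le> (1 - c ^ n) * t"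
    by (simp_all add: algebra_simps)
  moreover have "((1 + \<delta>) ^ n - 1) * t \<le> error_bound n x * t" "(1 - c ^ n) * t \<le> error_bound n x * t"
    using \<delta> c t_pos unfolding error_bound_def \<delta>_def[symmetric] c_def[symmetric]
    by (auto intro!: mult_right_mono simp: power_le_one)
  ultimately show ?thesis unfolding x_def t_def by linarith
qed

(* Below the threshold no bound is claimed: the theorem allows u to take the value \<infinity>. *)
definition error_fun :: "nat \<Rightarrow> real \<Rightarrow> ennreal" where
  "error_fun n x = (if error_threshold n \<le> x then ennreal (error_bound n x) else top)"

lemma error_fun_tendsto_0: "(error_fun n \<longlongrightarrow> 0) at_top"
proof -
  have "((\<lambda>x. ennreal (error_bound n x)) \<longlongrightarrow> ennreal 0) at_top"
    using error_bound_tendsto_0 by (rule tendsto_ennrealI)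
  moreover have "\<forall>\<^sub>F x in at_top. ennreal (error_bound n x) = error_fun n x"
    using eventually_ge_at_top[of "error_threshold n"] by eventually_elim (simp add: error_fun_def)
  ultimately show ?thesis by (simp add: tendsto_cong)
qed

lemma arg_hit_prob_error_fun:
  assumes "finite z" "card z = n + 1" "0 < \<rho>" "1 \<le> k" "k \<le> n" "P \<in> partitions_r z k"
  defines "t \<equiv> cover_length P / (\<rho> ^ (k - 1) * gamma0 n) * F_fun z P"
  shows "ennreal \<bar>arg_hit_prob z \<rho> P - t\<bar> \<le> error_fun n (min_dist z * \<rho>) * ennreal t"
proof -
  have t: "t = main_term z \<rho> P" "0 < t" using partitions_r_main_term[OF assms(1-6)] unfolding t_def by auto
  show ?thesis
  proof (cases "error_threshold n \<le> min_dist z * \<rho>")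
    case True
    note bound = arg_hit_prob_rel_error[OF assms(1-6) True, folded t(1)]
    have "0 \<le> error_bound n (min_dist z * \<rho>) * t" using order_trans[OF abs_ge_zero bound] .
    then have "0 \<le> error_bound n (min_dist z * \<rho>)" using t(2) by (simp add: zero_le_mult_iff)
    then show ?thesis using bound True t(2) unfolding error_fun_def by (simp add: ennreal_leI flip: ennreal_mult)
  next
    case False
    then show ?thesis using t(2) unfolding error_fun_def by (simp add: ennreal_top_mult)
  qed
qed

theorem proposition4:
  fixes n :: nat
  shows "\<exists>u :: real \<Rightarrow> ennreal. (u \<longlongrightarrow> 0) at_top \<and>
    (\<forall>(z :: real set) (\<rho> :: real) (k :: nat) P.
       finite z \<and> card z = n + 1 \<and> \<rho> > 0 \<and> 1 \<le> k \<and> k \<le> n \<and> P \<in> partitions_r z k \<longrightarrow>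
       ennreal \<bar>arg_hit_prob z \<rho> P -
                 cover_length P / (\<rho> ^ (k - 1) * gamma0 n) * F_fun z P\<bar>
         \<le> u (min_dist z * \<rho>) * ennreal (cover_length P / (\<rho> ^ (k - 1) * gamma0 n) * F_fun z P))"
  using error_fun_tendsto_0 arg_hit_prob_error_fun by blast

end
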